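(* Let $\tau\ge 0$, $C:=C([-\tau,0];\mathbb{R}^n)$ with the supremum norm, and consider the linear system $$x'(t)=\mathcal{L}(t)x_t,\qquad t\ge 0, \tag{L}$$ where $\mathcal{L}(t)\in L(C,\mathbb{R}^n)$ for each $t\ge0$, $t\mapsto \mathcal{L}(t)\phi$ is Borel measurable for each $\phi\in C$, and $\|\mathcal{L}(t)\|\le m(t)$ for some $m\in L^1_{\rm loc}(\mathbb{R}^+;\mathbb{R})$. Assume that (L) is exponentially asymptotically stable, i.e. there exist $k,\alpha>0$ such that $|x(t,t_0,\varphi)|\le k e^{-\alpha(t-t_0)}\|\varphi\|$ for all $t\ge t_0\ge 0$ and $\varphi\in C$, where $x(t,t_0,\varphi)$ is the solution of (L) with $x_{t_0}=\varphi$. Consider the perturbed equation $$x'(t)=\mathcal{L}(t)x_t+f(t,x_t),\qquad t\ge 0,\tag{P}$$ where $f:[0,\infty)\times S\to\mathbb{R}^n$ is continuous and $S\subset C$ is a positively invariant set for (P) (solutions are considered with initial data in $S$). (i) If $f$ is bounded, then (P) is dissipative: all solutions of (P) (with initial data in $S$) are defined on $[0,\infty)$ and there exists $M>0$ such that every solution satisfies $\limsup_{t\to\infty}|x(t)|\le M$. (ii) If there exists a measurable $\beta:\mathbb{R}^+\to\mathbb{R}^+$ with $\int_0^\infty\beta(s)\,ds<\infty$ such that $|f(t,\phi)|\le \beta(t)\|\phi\|$ for all $\phi\in S$ and all sufficiently large $t$, then every solution $x(t)$ of (P) satisfies $\lim_{t\to\infty}x(t)=0$.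
   Context: $|\cdot|$ is a fixed norm on $\mathbb{R}^n$, $\|\phi\|=\max_{\theta\in[-\tau,0]}|\phi(\theta)|$, and for a function $x$ defined on $[t-\tau,t]$, $x_t\in C$ denotes the segment $x_t(\theta)=x(t+\theta)$, $\theta\in[-\tau,0]$. $L(C,\mathbb{R}^n)$ is the space of bounded linear operators with the operator norm. *)

theory Defs
  imports "HOL-Analysis.Analysis"
begin

text \<open>The phase space C = C([-tau,0]; R^n). An element is represented by a function
  real => real^'n that is continuous on [-tau,0] and vanishes outside [-tau,0]
  (canonical representative).\<close>
definition Cspace :: "real \<Rightarrow> (real \<Rightarrow> 'a::real_normed_vector) set" where
  "Cspace \<tau> = {\<phi>. continuous_on {-\<tau>..0} \<phi> \<and> (\<forall>\<theta>. \<theta> \<notin> {-\<tau>..0} \<longrightarrow> \<phi> \<theta> = 0)}"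

definition cnorm :: "real \<Rightarrow> (real \<Rightarrow> 'a::real_normed_vector) \<Rightarrow> real" where
  "cnorm \<tau> \<phi> = (SUP \<theta>\<in>{-\<tau>..0}. norm (\<phi> \<theta>))"

definition seg :: "real \<Rightarrow> (real \<Rightarrow> 'a::zero) \<Rightarrow> real \<Rightarrow> real \<Rightarrow> 'a" where
  "seg \<tau> x t = (\<lambda>\<theta>. if \<theta> \<in> {-\<tau>..0} then x (t + \<theta>) else 0)"

text \<open>(Caratheodory) solution of the linear system (L) on [t0,T), given on [t0-tau,T).\<close>
definition solL :: "real \<Rightarrow> (real \<Rightarrow> (real \<Rightarrow> 'a::euclidean_space) \<Rightarrow> 'a)
    \<Rightarrow> real \<Rightarrow> real \<Rightarrow> (real \<Rightarrow> 'a) \<Rightarrow> bool" where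
  "solL \<tau> L t0 T x \<longleftrightarrow> continuous_on {t0-\<tau>..<T} x \<and>
     (\<forall>t\<in>{t0..<T}. ((\<lambda>s. L s (seg \<tau> x s)) has_integral (x t - x t0)) {t0..t})"

definition globL :: "real \<Rightarrow> (real \<Rightarrow> (real \<Rightarrow> 'a::euclidean_space) \<Rightarrow> 'a)
    \<Rightarrow> real \<Rightarrow> (real \<Rightarrow> 'a) \<Rightarrow> bool" where
  "globL \<tau> L t0 x \<longleftrightarrow> (\<forall>T>t0. solL \<tau> L t0 T x)"

text \<open>(Caratheodory) solution of the perturbed system (P) on [t0,T) with segments in S.\<close>
definition solP :: "real \<Rightarrow> (real \<Rightarrow> (real \<Rightarrow> 'a::euclidean_space) \<Rightarrow> 'a)
    \<Rightarrow> (real \<Rightarrow> (real \<Rightarrow> 'a) \<Rightarrow> 'a) \<Rightarrow> (real \<Rightarrow> 'a) set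
    \<Rightarrow> real \<Rightarrow> real \<Rightarrow> (real \<Rightarrow> 'a) \<Rightarrow> bool" where
  "solP \<tau> L f S t0 T x \<longleftrightarrow> continuous_on {t0-\<tau>..<T} x \<and>
     (\<forall>t\<in>{t0..<T}. seg \<tau> x t \<in> S) \<and>
     (\<forall>t\<in>{t0..<T}. ((\<lambda>s. L s (seg \<tau> x s) + f s (seg \<tau> x s)) has_integral (x t - x t0)) {t0..t})"

definition globP :: "real \<Rightarrow> (real \<Rightarrow> (real \<Rightarrow> 'a::euclidean_space) \<Rightarrow> 'a)
    \<Rightarrow> (real \<Rightarrow> (real \<Rightarrow> 'a) \<Rightarrow> 'a) \<Rightarrow> (real \<Rightarrow> 'a) set
    \<Rightarrow> real \<Rightarrow> (real \<Rightarrow> 'a) \<Rightarrow> bool" where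
  "globP \<tau> L f S t0 x \<longleftrightarrow> (\<forall>T>t0. solP \<tau> L f S t0 T x)"

definition exp_stable :: "real \<Rightarrow> (real \<Rightarrow> (real \<Rightarrow> 'a::euclidean_space) \<Rightarrow> 'a)
    \<Rightarrow> real \<Rightarrow> real \<Rightarrow> bool" where
  "exp_stable \<tau> L k \<alpha> \<longleftrightarrow>
     (\<forall>t0\<ge>0. \<forall>\<phi>\<in>Cspace \<tau>. \<forall>x. globL \<tau> L t0 x \<and> seg \<tau> x t0 = \<phi> \<longrightarrow>
        (\<forall>t\<ge>t0. norm (x t) \<le> k * exp (-\<alpha> * (t - t0)) * cnorm \<tau> \<phi>))"

definition cont_on_S :: "real \<Rightarrow> (real \<Rightarrow> (real \<Rightarrow> 'a::real_normed_vector) \<Rightarrow> 'a)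
    \<Rightarrow> (real \<Rightarrow> 'a) set \<Rightarrow> bool" where
  "cont_on_S \<tau> f S \<longleftrightarrow>
     (\<forall>t\<ge>0. \<forall>\<phi>\<in>S. \<forall>\<epsilon>>0. \<exists>\<delta>>0. \<forall>s\<ge>0. \<forall>\<psi>\<in>S.
        \<bar>s - t\<bar> < \<delta> \<and> cnorm \<tau> (\<lambda>\<theta>. \<psi> \<theta> - \<phi> \<theta>) < \<delta> \<longrightarrow> dist (f s \<psi>) (f t \<phi>) < \<epsilon>)"

text \<open>Positive invariance of S for (P): solutions with initial data in S exist (locally)
  and remain in S, including at the right end point of their (closed) interval of existence.\<close>
definition pos_invariant :: "real \<Rightarrow> (real \<Rightarrow> (real \<Rightarrow> 'a::euclidean_space) \<Rightarrow> 'a)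
    \<Rightarrow> (real \<Rightarrow> (real \<Rightarrow> 'a) \<Rightarrow> 'a) \<Rightarrow> (real \<Rightarrow> 'a) set \<Rightarrow> bool" where
  "pos_invariant \<tau> L f S \<longleftrightarrow>
     (\<forall>t0\<ge>0. \<forall>\<phi>\<in>S. \<exists>\<delta>>0. \<exists>x. seg \<tau> x t0 = \<phi> \<and> solP \<tau> L f S t0 (t0 + \<delta>) x) \<and>
     (\<forall>t0\<ge>0. \<forall>T>t0. \<forall>x. solP \<tau> L f S t0 T x \<and> continuous_on {t0-\<tau>..T} x \<longrightarrow> seg \<tau> x T \<in> S)"

end

theory Submission
  imports Defs "HOL-Real_Asymp.Real_Asymp"
begin

text \<open>
  Cut \<open>[t\<^sub>0, t]\<close> into pieces \<open>[s\<^sub>i, s\<^sub>i\<^sub>+\<^sub>1]\<close> with \<open>\<integral>m \<le> 1/2\<close> and let \<open>Y\<^sub>i\<close> solve (L) from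
  \<open>s\<^sub>i\<close> with initial segment \<open>x\<^bsub>s\<^sub>i\<^esub>\<close>. On such a piece a contraction argument bounds
  \<open>\<parallel>(x - Y\<^sub>i)\<^bsub>s\<^sub>i\<^sub>+\<^sub>1\<^esub>\<parallel>\<close> by \<open>2 \<integral>\<^sub>i |f(s, x\<^sub>s)| ds\<close>, the integral over the piece; since
  \<open>Y\<^sub>i\<^sub>+\<^sub>1 - Y\<^sub>i\<close> solves (L) from \<open>s\<^sub>i\<^sub>+\<^sub>1\<close> with that initial segment, exponential stability gives
  the discrete variation of constants inequality
    \<open>|x(t)| \<le> k exp(-\<alpha>(t - t\<^sub>0)) \<parallel>x\<^bsub>t\<^sub>0\<^esub>\<parallel> + \<Sum>\<^sub>i 2k exp(-\<alpha>(t - s\<^sub>i\<^sub>+\<^sub>1)) \<integral>\<^sub>i |f(s, x\<^sub>s)| ds\<close>.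
  (The same contraction argument provides the solutions of (L) to which the stability hypothesis
  applies.) For \<open>|f| \<le> B\<close> the sum is a geometric series bounded by \<open>2kB exp(\<alpha>)/\<alpha>\<close>. This gives
  dissipativity and, being an a priori bound on every solution, lets each solution be continued
  past any finite time; Zorn's lemma then yields a global continuation. For
  \<open>|f(t, \<phi>)| \<le> \<beta>(t) \<parallel>\<phi>\<parallel>\<close> the sum is at most \<open>2k sup|x| \<integral>\<^bsub>t\<^sub>1\<^esub>\<^sup>t \<beta>\<close>, which shows first that
  \<open>x\<close> is bounded and then that \<open>x(t) \<rightarrow> 0\<close>.
\<close>

section \<open>Segments and the sup norm\<close>

lemma cnorm_leI:
  assumes "\<tau> \<ge> 0" "\<And>\<theta>. \<theta> \<in> {-\<tau>..0} \<Longrightarrow> norm (\<phi> \<theta>) \<le> B"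
  shows "cnorm \<tau> \<phi> \<le> B"
  unfolding cnorm_def using assms by (intro cSUP_least) auto

lemma norm_le_cnorm:
  assumes "continuous_on {-\<tau>..0} \<phi>" "\<theta> \<in> {-\<tau>..0}"
  shows "norm (\<phi> \<theta>) \<le> cnorm \<tau> \<phi>"
proof -
  have "compact ((\<lambda>\<theta>. norm (\<phi> \<theta>)) ` {-\<tau>..0})"
    by (intro compact_continuous_image continuous_on_norm assms compact_Icc)
  then have "bdd_above ((\<lambda>\<theta>. norm (\<phi> \<theta>)) ` {-\<tau>..0})"
    by (intro bounded_imp_bdd_above compact_imp_bounded)
  then show ?thesis
    unfolding cnorm_def using assms(2) by (intro cSUP_upper)
qed

lemma cnorm_nonneg:
  assumes "\<tau> \<ge> 0" "continuous_on {-\<tau>..0} \<phi>"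
  shows "0 \<le> cnorm \<tau> \<phi>"
proof -
  have "norm (\<phi> 0) \<le> cnorm \<tau> \<phi>"
    using assms by (intro norm_le_cnorm) auto
  then show ?thesis
    by (rule order_trans[OF norm_ge_zero])
qed

lemma seg_cong:
  assumes "\<And>s. s \<in> {t-\<tau>..t} \<Longrightarrow> x s = y s"
  shows "seg \<tau> x t = seg \<tau> y t"
  using assms unfolding seg_def fun_eq_iff by simp

lemma seg_eqD:
  assumes "seg \<tau> x t = seg \<tau> y t" "s \<in> {t-\<tau>..t}"
  shows "x s = y s"
proof -
  have "seg \<tau> x t (s - t) = seg \<tau> y t (s - t)"
    using assms(1) by simp
  then show ?thesis
    using assms(2) by (simp add: seg_def)
qed

lemma seg_diff:
  fixes x y :: "real \<Rightarrow> 'a::ab_group_add"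
  shows "seg \<tau> (\<lambda>s. x s - y s) t = (\<lambda>\<theta>. seg \<tau> x t \<theta> - seg \<tau> y t \<theta>)"
  by (simp add: seg_def fun_eq_iff)

lemma continuous_on_seg:
  assumes "continuous_on {t-\<tau>..t} x"
  shows "continuous_on {-\<tau>..0} (seg \<tau> x t)"
proof -
  have "continuous_on {-\<tau>..0} (\<lambda>\<theta>. x (t + \<theta>))"
    by (rule continuous_on_compose2[OF assms]) (auto intro!: continuous_intros)
  then show ?thesis
    by (rule continuous_on_eq) (simp add: seg_def)
qed

lemma seg_in_Cspace:
  assumes "continuous_on {t-\<tau>..t} x"
  shows "seg \<tau> x t \<in> Cspace \<tau>"
  unfolding Cspace_def using continuous_on_seg[OF assms] by (simp add: seg_def)

lemma cnorm_seg_leI: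
  assumes "\<tau> \<ge> 0" "\<And>s. s \<in> {t-\<tau>..t} \<Longrightarrow> norm (x s) \<le> B"
  shows "cnorm \<tau> (seg \<tau> x t) \<le> B"
  using assms by (intro cnorm_leI) (simp_all add: seg_def)

lemma norm_le_cnorm_seg:
  assumes "continuous_on {t-\<tau>..t} x" "s \<in> {t-\<tau>..t}"
  shows "norm (x s) \<le> cnorm \<tau> (seg \<tau> x t)"
  using norm_le_cnorm[OF continuous_on_seg[OF assms(1)], of "s - t"] assms(2)
  by (simp add: seg_def)

lemma Cspace_diff: "\<phi> \<in> Cspace \<tau> \<Longrightarrow> \<psi> \<in> Cspace \<tau> \<Longrightarrow> (\<lambda>\<theta>. \<phi> \<theta> - \<psi> \<theta>) \<in> Cspace \<tau>"
  unfolding Cspace_def by (auto intro: continuous_on_diff)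

lemma Cspace_scaleR: "\<phi> \<in> Cspace \<tau> \<Longrightarrow> (\<lambda>\<theta>. c *\<^sub>R \<phi> \<theta>) \<in> Cspace \<tau>"
  unfolding Cspace_def by (auto intro: continuous_on_scaleR continuous_on_const)

lemma cnorm_seg_tendsto_zero:
  fixes w :: "real \<Rightarrow> 'a::real_normed_vector"
  assumes "\<tau> \<ge> 0" "continuous_on UNIV w" "c \<longlonglongrightarrow> t"
  shows "(\<lambda>j. cnorm \<tau> (\<lambda>\<theta>. seg \<tau> w (c j) \<theta> - seg \<tau> w t \<theta>)) \<longlonglongrightarrow> 0"
proof (rule LIMSEQ_I)
  fix r :: real
  assume r: "r > 0"
  define K where "K = {t - \<tau> - 1 .. t + 1}"
  have "uniformly_continuous_on K w"
    unfolding K_def by (intro compact_uniformly_continuous continuous_on_subset[OF assms(2)]) auto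
  then obtain e where e: "e > 0" "\<forall>y\<in>K. \<forall>y'\<in>K. dist y' y < e \<longrightarrow> dist (w y') (w y) < r / 2"
    using r unfolding uniformly_continuous_on_def by (meson half_gt_zero)
  obtain N where N: "\<forall>j\<ge>N. dist (c j) t < min e 1"
    using assms(3) e(1) unfolding lim_sequentially by (meson zero_less_one min_less_iff_conj)
  have "norm (cnorm \<tau> (\<lambda>\<theta>. seg \<tau> w (c j) \<theta> - seg \<tau> w t \<theta>) - 0) < r" if "j \<ge> N" for j
  proof -
    have close: "dist (c j) t < e" "dist (c j) t < 1"
      using N that by auto
    have "cnorm \<tau> (\<lambda>\<theta>. seg \<tau> w (c j) \<theta> - seg \<tau> w t \<theta>) \<le> r / 2"
    proof (rule cnorm_leI[OF assms(1)])
      fix \<theta> :: real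
      assume "\<theta> \<in> {-\<tau>..0}"
      moreover have "dist (c j + \<theta>) (t + \<theta>) < e"
        using close by (simp add: dist_real_def)
      moreover have "c j + \<theta> \<in> K" "t + \<theta> \<in> K"
        using close \<open>\<theta> \<in> {-\<tau>..0}\<close> unfolding K_def dist_real_def by auto
      ultimately show "norm (seg \<tau> w (c j) \<theta> - seg \<tau> w t \<theta>) \<le> r / 2"
        using e(2) by (fastforce simp: seg_def dist_norm)
    qed
    moreover have "0 \<le> cnorm \<tau> (\<lambda>\<theta>. seg \<tau> w (c j) \<theta> - seg \<tau> w t \<theta>)"
      using assms(2) by (intro cnorm_nonneg[OF assms(1)] continuous_on_diff continuous_on_seg)
        (auto intro: continuous_on_subset)
    ultimately show ?thesis
      using r by simp
  qed
  then show "\<exists>N. \<forall>j\<ge>N. norm (cnorm \<tau> (\<lambda>\<theta>. seg \<tau> w (c j) \<theta> - seg \<tau> w t \<theta>) - 0) < r"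
    by blast
qed

section \<open>The linear equation\<close>

locale linear_rfde =
  fixes \<tau> :: real
    and L :: "real \<Rightarrow> (real \<Rightarrow> 'a::euclidean_space) \<Rightarrow> 'a"
    and m :: "real \<Rightarrow> real"
  assumes tau: "\<tau> \<ge> 0"
    and L_add: "\<forall>t\<ge>0. \<forall>\<phi>\<in>Cspace \<tau>. \<forall>\<psi>\<in>Cspace \<tau>. L t (\<lambda>\<theta>. \<phi> \<theta> + \<psi> \<theta>) = L t \<phi> + L t \<psi>"
    and L_scale: "\<forall>t\<ge>0. \<forall>c::real. \<forall>\<phi>\<in>Cspace \<tau>. L t (\<lambda>\<theta>. c *\<^sub>R \<phi> \<theta>) = c *\<^sub>R L t \<phi>"
    and L_meas: "\<forall>\<phi>\<in>Cspace \<tau>. set_borel_measurable lborel {0..} (\<lambda>t. L t \<phi>)"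
    and L_bound: "\<forall>t\<ge>0. \<forall>\<phi>\<in>Cspace \<tau>. norm (L t \<phi>) \<le> m t * cnorm \<tau> \<phi>"
    and m_loc: "\<forall>T\<ge>0. set_integrable lborel {0..T} m"
begin

lemma L_diff:
  assumes "t \<ge> 0" "\<phi> \<in> Cspace \<tau>" "\<psi> \<in> Cspace \<tau>"
  shows "L t (\<lambda>\<theta>. \<phi> \<theta> - \<psi> \<theta>) = L t \<phi> - L t \<psi>"
proof -
  have "L t (\<lambda>\<theta>. \<phi> \<theta> - \<psi> \<theta>) = L t (\<lambda>\<theta>. \<phi> \<theta> + (-1) *\<^sub>R \<psi> \<theta>)"
    by simp
  also have "\<dots> = L t \<phi> + L t (\<lambda>\<theta>. (-1) *\<^sub>R \<psi> \<theta>)"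
    by (rule L_add[rule_format, OF assms(1,2) Cspace_scaleR[OF assms(3)]])
  also have "L t (\<lambda>\<theta>. (-1) *\<^sub>R \<psi> \<theta>) = (-1) *\<^sub>R L t \<psi>"
    by (rule L_scale[rule_format, OF assms(1,3)])
  finally show ?thesis
    by simp
qed

lemma L_seg_diff:
  assumes "t \<ge> 0" "continuous_on {t-\<tau>..t} x" "continuous_on {t-\<tau>..t} y"
  shows "L t (seg \<tau> (\<lambda>s. x s - y s) t) = L t (seg \<tau> x t) - L t (seg \<tau> y t)"
  unfolding seg_diff using assms by (intro L_diff seg_in_Cspace)

text \<open>\<open>m \<ge> 0\<close> is not assumed; it follows by testing the bound on a constant segment of norm 1.\<close>

lemma m_nonneg:
  assumes "t \<ge> 0"
  shows "m t \<ge> 0"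
proof -
  obtain v :: 'a where v: "v \<in> Basis"
    using nonempty_Basis by blast
  have c: "continuous_on {0-\<tau>..0} (\<lambda>_. v)"
    by simp
  have "1 \<le> cnorm \<tau> (seg \<tau> (\<lambda>_. v) 0)"
    using norm_le_cnorm_seg[OF c, of 0] v tau by simp
  moreover have "norm (L t (seg \<tau> (\<lambda>_. v) 0)) \<le> m t * cnorm \<tau> (seg \<tau> (\<lambda>_. v) 0)"
    using L_bound assms seg_in_Cspace[OF c] by blast
  then have "0 \<le> m t * cnorm \<tau> (seg \<tau> (\<lambda>_. v) 0)"
    by (rule order_trans[OF norm_ge_zero])
  ultimately show ?thesis
    by (simp add: zero_le_mult_iff)
qed

lemma m_set_integrable:
  assumes "0 \<le> a"
  shows "set_integrable lborel {a..b} m"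
  using assms by (intro set_integrable_subset[OF m_loc[rule_format, of "max a b"]]) auto

lemma m_integrable:
  assumes "0 \<le> a"
  shows "m integrable_on {a..b}"
  using set_borel_integral_eq_integral(1)[OF m_set_integrable[OF assms]] .

lemma integral_m_nonneg:
  assumes "0 \<le> a"
  shows "0 \<le> integral {a..b} m"
  using assms m_nonneg by (intro integral_nonneg m_integrable) auto

lemma integral_m_mono:
  assumes "0 \<le> a" "{c..d} \<subseteq> {a..b}"
  shows "integral {c..d} m \<le> integral {a..b} m"
proof (cases "c \<le> d")
  case True
  have "0 \<le> c"
    using assms True by auto
  have "\<forall>s\<in>{a..b}. 0 \<le> m s"
    using assms(1) m_nonneg by simp
  then show ?thesis
    by (intro integral_subset_le[OF assms(2)] m_integrable assms(1) \<open>0 \<le> c\<close>)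
next
  case False
  then show ?thesis
    using integral_m_nonneg[OF assms(1)] by simp
qed

lemma L_seg_bound:
  assumes "t \<ge> 0" "continuous_on {t-\<tau>..t} x" "\<And>s. s \<in> {t-\<tau>..t} \<Longrightarrow> norm (x s) \<le> B"
  shows "norm (L t (seg \<tau> x t)) \<le> m t * B"
proof -
  have "norm (L t (seg \<tau> x t)) \<le> m t * cnorm \<tau> (seg \<tau> x t)"
    using L_bound assms(1) seg_in_Cspace[OF assms(2)] by blast
  also have "\<dots> \<le> m t * B"
    using assms m_nonneg tau by (intro mult_left_mono cnorm_seg_leI) simp_all
  finally show ?thesis .
qed

lemma L_indicator_measurable:
  assumes "0 \<le> a" "\<phi> \<in> Cspace \<tau>"
  shows "(\<lambda>s. indicator {a..b} s *\<^sub>R L s \<phi>) \<in> borel_measurable lborel"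
proof -
  have meas: "(\<lambda>s. indicator {0..} s *\<^sub>R L s \<phi>) \<in> borel_measurable lborel"
    using L_meas assms(2) unfolding set_borel_measurable_def by blast
  have "(\<lambda>s. indicator {a..b} s *\<^sub>R (indicator {0..} s *\<^sub>R L s \<phi>)) \<in> borel_measurable lborel"
    by (rule borel_measurable_scaleR[OF borel_measurable_indicator meas]) simp
  moreover have "(\<lambda>s. indicator {a..b} s *\<^sub>R (indicator {0..} s *\<^sub>R L s \<phi>))
      = (\<lambda>s. indicator {a..b} s *\<^sub>R L s \<phi>)"
    using assms(1) by (intro ext) (simp add: indicator_def)
  ultimately show ?thesis
    by metis
qed

lemma tendsto_L_seg:
  assumes t: "t \<ge> 0" and w: "continuous_on UNIV w" and c: "c \<longlonglongrightarrow> r"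
  shows "(\<lambda>j. L t (seg \<tau> w (c j))) \<longlonglongrightarrow> L t (seg \<tau> w r)"
proof -
  have in_C: "seg \<tau> w s \<in> Cspace \<tau>" for s
    by (intro seg_in_Cspace continuous_on_subset[OF w]) simp
  have "norm (L t (seg \<tau> w (c j)) - L t (seg \<tau> w r))
      \<le> m t * cnorm \<tau> (\<lambda>\<theta>. seg \<tau> w (c j) \<theta> - seg \<tau> w r \<theta>)" for j
  proof -
    have "L t (seg \<tau> w (c j)) - L t (seg \<tau> w r) = L t (\<lambda>\<theta>. seg \<tau> w (c j) \<theta> - seg \<tau> w r \<theta>)"
      by (rule L_diff[symmetric, OF t in_C in_C])
    then show ?thesis
      using L_bound t Cspace_diff[OF in_C in_C] by simp
  qed
  moreover have "(\<lambda>j. m t * cnorm \<tau> (\<lambda>\<theta>. seg \<tau> w (c j) \<theta> - seg \<tau> w r \<theta>)) \<longlonglongrightarrow> 0"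
    using cnorm_seg_tendsto_zero[OF tau w c] by (rule tendsto_mult_right_zero)
  ultimately have "(\<lambda>j. L t (seg \<tau> w (c j)) - L t (seg \<tau> w r)) \<longlonglongrightarrow> 0"
    by (rule Lim_null_comparison[OF always_eventually, OF allI])
  then show ?thesis
    by (rule LIM_zero_cancel)
qed

lemma ceiling_grid_bounds:
  fixes p :: real
  assumes "p > 0"
  shows "s \<le> a + \<lceil>(s - a) * p\<rceil> / p" "a + \<lceil>(s - a) * p\<rceil> / p \<le> s + inverse p"
proof -
  define C where "C = real_of_int \<lceil>(s - a) * p\<rceil>"
  have "(s - a) * p \<le> C" "C \<le> (s - a) * p + 1"
    unfolding C_def by linarith+
  then have "s - a \<le> C / p" "C / p \<le> (s - a) + 1 / p"
    using assms by (simp_all add: pos_le_divide_eq pos_divide_le_eq field_simps)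
  then show "s \<le> a + \<lceil>(s - a) * p\<rceil> / p" "a + \<lceil>(s - a) * p\<rceil> / p \<le> s + inverse p"
    unfolding C_def by (simp_all add: inverse_eq_divide)
qed

text \<open>
  \<open>s \<mapsto> L s w\<^sub>s\<close> is the pointwise limit of \<open>s \<mapsto> L s w\<^bsub>c j s\<^esub>\<close>, where \<open>c j s\<close> rounds \<open>s\<close>
  up to the grid \<open>a + \<int>/(j+1)\<close>; each of these takes countably many segments as arguments.
\<close>

lemma L_seg_measurable:
  assumes a: "0 \<le> a" and w: "continuous_on UNIV w"
  shows "(\<lambda>s. indicator {a..b} s *\<^sub>R L s (seg \<tau> w s)) \<in> borel_measurable lborel"
proof (rule borel_measurable_LIMSEQ_metric)
  define c where "c j s = a + real_of_int \<lceil>(s - a) * real (Suc j)\<rceil> / real (Suc j)" for j :: nat and s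
  define F where "F j s = indicator {a..b} s *\<^sub>R L s (seg \<tau> w (c j s))" for j s
  show "F j \<in> borel_measurable lborel" for j
  proof -
    define G where "G i s = indicator {a..b} s *\<^sub>R L s (seg \<tau> w (a + real_of_int i / real (Suc j)))"
      for i :: int and s
    have "G i \<in> borel_measurable lborel" for i
      unfolding G_def by (intro L_indicator_measurable a seg_in_Cspace continuous_on_subset[OF w]) simp
    moreover have "(\<lambda>s. \<lceil>(s - a) * real (Suc j)\<rceil>) \<in> measurable lborel (count_space UNIV)"
      by measurable
    ultimately have "(\<lambda>s. G \<lceil>(s - a) * real (Suc j)\<rceil> s) \<in> borel_measurable lborel"
      by (rule measurable_compose_countable)
    moreover have "F j = (\<lambda>s. G \<lceil>(s - a) * real (Suc j)\<rceil> s)"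
      by (simp add: fun_eq_iff F_def c_def G_def)
    ultimately show ?thesis
      by simp
  qed
  fix s :: real
  show "(\<lambda>j. F j s) \<longlonglongrightarrow> indicator {a..b} s *\<^sub>R L s (seg \<tau> w s)"
  proof (cases "s \<in> {a..b}")
    case True
    have "s \<le> c j s" "c j s \<le> s + inverse (real (Suc j))" for j
      unfolding c_def using ceiling_grid_bounds[where p = "real (Suc j)" and s = s and a = a] by simp_all
    then have "(\<lambda>j. c j s) \<longlonglongrightarrow> s"
      by (intro tendsto_sandwich[OF _ _ tendsto_const LIMSEQ_inverse_real_of_nat_add]) simp_all
    then have "(\<lambda>j. L s (seg \<tau> w (c j s))) \<longlonglongrightarrow> L s (seg \<tau> w s)"
      using True a by (intro tendsto_L_seg w) auto
    then show ?thesis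
      using True by (simp add: F_def)
  qed (simp add: F_def)
qed

lemma L_seg_set_integrable:
  assumes a: "0 \<le> a" and ab: "a \<le> b" and w: "continuous_on {a-\<tau>..b} w"
  shows "set_integrable lborel {a..b} (\<lambda>s. L s (seg \<tau> w s))"
proof -
  define cl where "cl s = max (a - \<tau>) (min b s)" for s :: real
  define w' where "w' = w \<circ> cl"
  have cl: "continuous_on UNIV cl" "cl ` UNIV \<subseteq> {a-\<tau>..b}"
    using ab tau unfolding cl_def by (auto intro!: continuous_intros)
  then have w'c: "continuous_on UNIV w'"
    unfolding w'_def by (intro continuous_on_compose continuous_on_subset[OF w]) auto
  obtain K where K: "\<And>y. y \<in> w ` {a-\<tau>..b} \<Longrightarrow> norm y \<le> K"
    using compact_imp_bounded[OF compact_continuous_image[OF w compact_Icc]] bounded_iff by metis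
  have "integrable lborel (\<lambda>s. indicator {a..b} s *\<^sub>R L s (seg \<tau> w' s))"
  proof (rule Bochner_Integration.integrable_bound[OF _ L_seg_measurable[OF a w'c]])
    show "integrable lborel (\<lambda>s. K * (indicator {a..b} s *\<^sub>R m s))"
      using m_set_integrable[OF a, of b] unfolding set_integrable_def by (rule integrable_mult_right)
    have "norm (L s (seg \<tau> w' s)) \<le> \<bar>K * m s\<bar>" if "s \<in> {a..b}" for s
    proof -
      have "norm (L s (seg \<tau> w' s)) \<le> m s * K"
        using that a cl(2) K by (intro L_seg_bound continuous_on_subset[OF w'c]) (auto simp: w'_def)
      then show ?thesis
        by (simp add: mult.commute)
    qed
    then show "AE s in lborel. norm (indicator {a..b} s *\<^sub>R L s (seg \<tau> w' s))
        \<le> norm (K * (indicator {a..b} s *\<^sub>R m s))"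
      by (intro AE_I2) (simp add: indicator_def)
  qed
  moreover have "seg \<tau> w' s = seg \<tau> w s" if "s \<in> {a..b}" for s
    using that by (intro seg_cong) (simp add: w'_def cl_def)
  then have "(\<lambda>s. indicator {a..b} s *\<^sub>R L s (seg \<tau> w' s)) = (\<lambda>s. indicator {a..b} s *\<^sub>R L s (seg \<tau> w s))"
    by (intro ext) (auto simp: indicator_def)
  ultimately show ?thesis
    unfolding set_integrable_def by simp
qed

lemma L_seg_integrable:
  assumes "0 \<le> a" "continuous_on {a-\<tau>..b} w"
  shows "(\<lambda>s. L s (seg \<tau> w s)) integrable_on {a..b}"
proof (cases "a \<le> b")
  case True
  then show ?thesis
    using set_borel_integral_eq_integral(1)[OF L_seg_set_integrable] assms by blast
qed (simp add: integrable_on_empty)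

lemma norm_integral_L_seg_le:
  assumes "0 \<le> a" "continuous_on {a-\<tau>..r} w" "\<And>s. s \<in> {a-\<tau>..r} \<Longrightarrow> norm (w s) \<le> B"
  shows "norm (integral {a..r} (\<lambda>s. L s (seg \<tau> w s))) \<le> integral {a..r} m * B"
proof -
  have "norm (integral {a..r} (\<lambda>s. L s (seg \<tau> w s))) \<le> integral {a..r} (\<lambda>s. m s * B)"
  proof (rule integral_norm_bound_integral)
    show "(\<lambda>s. L s (seg \<tau> w s)) integrable_on {a..r}"
      using assms by (intro L_seg_integrable)
    show "(\<lambda>s. m s * B) integrable_on {a..r}"
      using assms by (intro integrable_on_mult_left m_integrable)
    show "norm (L s (seg \<tau> w s)) \<le> m s * B" if "s \<in> {a..r}" for s
      using that assms by (intro L_seg_bound continuous_on_subset[OF assms(2)]) auto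
  qed
  then show ?thesis
    by simp
qed

end

definition sol_Icc :: "real \<Rightarrow> (real \<Rightarrow> (real \<Rightarrow> 'a::euclidean_space) \<Rightarrow> 'a) \<Rightarrow> real \<Rightarrow> real
    \<Rightarrow> (real \<Rightarrow> 'a) \<Rightarrow> bool" where
  "sol_Icc \<tau> F a b y \<longleftrightarrow> continuous_on {a-\<tau>..b} y \<and>
     (\<forall>t\<in>{a..b}. ((\<lambda>s. F s (seg \<tau> y s)) has_integral (y t - y a)) {a..t})"

lemma sol_Icc_cong:
  assumes "sol_Icc \<tau> F a b y" "\<And>t. t \<in> {a-\<tau>..b} \<Longrightarrow> x t = y t" "\<tau> \<ge> 0"
  shows "sol_Icc \<tau> F a b x"
  unfolding sol_Icc_def
proof (intro conjI ballI)
  have "continuous_on {a-\<tau>..b} y"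
    using assms(1) unfolding sol_Icc_def by blast
  then show "continuous_on {a-\<tau>..b} x"
    by (rule continuous_on_eq) (simp add: assms(2))
  fix t
  assume t: "t \<in> {a..b}"
  have "x t = y t" "x a = y a"
    using t assms(3) by (simp_all add: assms(2))
  then have H: "((\<lambda>s. F s (seg \<tau> y s)) has_integral (x t - x a)) {a..t}"
    using assms(1) t unfolding sol_Icc_def by simp
  have "seg \<tau> y s = seg \<tau> x s" if "s \<in> {a..t}" for s
    using that t by (intro seg_cong assms(2)[symmetric]) auto
  then show "((\<lambda>s. F s (seg \<tau> x s)) has_integral (x t - x a)) {a..t}"
    by (intro has_integral_eq[rotated, OF H]) simp
qed

lemma has_integral_tail:
  fixes f :: "real \<Rightarrow> 'a::euclidean_space"
  assumes "(f has_integral A) {a..r}" "(f has_integral B) {a..p}" "a \<le> p" "p \<le> r"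
  shows "(f has_integral (A - B)) {p..r}"
proof -
  have fi: "f integrable_on {a..r}"
    using assms(1) by blast
  have "f integrable_on {p..r}"
    by (rule integrable_on_subinterval[OF fi]) (use assms in auto)
  moreover have "integral {a..p} f + integral {p..r} f = integral {a..r} f"
    by (rule Henstock_Kurzweil_Integration.integral_combine[OF assms(3,4) fi])
  ultimately show ?thesis
    using assms(1,2) by (metis add_diff_cancel_left' integrable_integral integral_unique)
qed

lemma sol_Icc_subinterval:
  assumes "sol_Icc \<tau> F a b y" "a \<le> c" "c \<le> d" "d \<le> b"
  shows "sol_Icc \<tau> F c d y"
  unfolding sol_Icc_def
proof (intro conjI ballI)
  have "continuous_on {a-\<tau>..b} y"
    using assms(1) unfolding sol_Icc_def by blast
  then show "continuous_on {c-\<tau>..d} y"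
    by (rule continuous_on_subset) (use assms in auto)
  fix t
  assume t: "t \<in> {c..d}"
  then have "((\<lambda>s. F s (seg \<tau> y s)) has_integral (y t - y a)) {a..t}"
    "((\<lambda>s. F s (seg \<tau> y s)) has_integral (y c - y a)) {a..c}"
    using assms unfolding sol_Icc_def by auto
  then have "((\<lambda>s. F s (seg \<tau> y s)) has_integral ((y t - y a) - (y c - y a))) {c..t}"
    by (rule has_integral_tail) (use t assms(2) in auto)
  then show "((\<lambda>s. F s (seg \<tau> y s)) has_integral (y t - y c)) {c..t}"
    by simp
qed

lemma sol_Icc_glue:
  assumes y: "sol_Icc \<tau> F a c y" and z: "sol_Icc \<tau> F c d z"
    and zy: "\<And>s. s \<in> {c-\<tau>..c} \<Longrightarrow> z s = y s"
    and "a \<le> c" "c \<le> d" "\<tau> \<ge> 0"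
  shows "sol_Icc \<tau> F a d (\<lambda>t. if t \<le> c then y t else z t)"
    (is "sol_Icc \<tau> F a d ?w")
  unfolding sol_Icc_def
proof (intro conjI ballI)
  have "sol_Icc \<tau> F a c ?w"
    by (rule sol_Icc_cong[OF y _ assms(6)]) simp
  moreover have "sol_Icc \<tau> F c d ?w"
    by (rule sol_Icc_cong[OF z _ assms(6)]) (simp add: zy)
  ultimately have w1: "continuous_on {a-\<tau>..c} ?w"
      "\<forall>t\<in>{a..c}. ((\<lambda>s. F s (seg \<tau> ?w s)) has_integral (?w t - ?w a)) {a..t}"
    and w2: "continuous_on {c-\<tau>..d} ?w"
      "\<forall>t\<in>{c..d}. ((\<lambda>s. F s (seg \<tau> ?w s)) has_integral (?w t - ?w c)) {c..t}"
    unfolding sol_Icc_def by blast+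
  have "continuous_on {c..d} ?w"
    using w2(1) by (rule continuous_on_subset) (use assms(6) in auto)
  then have "continuous_on ({a-\<tau>..c} \<union> {c..d}) ?w"
    using w1(1) by (intro continuous_on_closed_Un) auto
  moreover have "{a-\<tau>..c} \<union> {c..d} = {a-\<tau>..d}"
    using assms by auto
  ultimately show "continuous_on {a-\<tau>..d} ?w"
    by simp
  fix t
  assume t: "t \<in> {a..d}"
  show "((\<lambda>s. F s (seg \<tau> ?w s)) has_integral (?w t - ?w a)) {a..t}"
  proof (cases "t \<le> c")
    case True
    then show ?thesis
      using w1 t by auto
  next
    case False
    have "((\<lambda>s. F s (seg \<tau> ?w s)) has_integral (?w c - ?w a)) {a..c}"
      using w1(2) assms(4) by auto
    moreover have "((\<lambda>s. F s (seg \<tau> ?w s)) has_integral (?w t - ?w c)) {c..t}"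
      using w2(2)[rule_format, of t] t False by simp
    ultimately have "((\<lambda>s. F s (seg \<tau> ?w s)) has_integral (?w c - ?w a) + (?w t - ?w c)) {a..t}"
      using False assms(4) by (intro has_integral_combine[of a c t]) auto
    then show ?thesis
      by simp
  qed
qed

lemma globL_iff_sol_Icc: "globL \<tau> L a y \<longleftrightarrow> (\<forall>b\<ge>a. sol_Icc \<tau> L a b y)"
proof
  assume y: "globL \<tau> L a y"
  show "\<forall>b\<ge>a. sol_Icc \<tau> L a b y"
  proof (intro allI impI)
    fix b
    assume "a \<le> b"
    then have "solL \<tau> L a (b + 1) y"
      using y unfolding globL_def by simp
    then have "continuous_on {a-\<tau>..<b + 1} y"
      "\<forall>t\<in>{a..b}. ((\<lambda>s. L s (seg \<tau> y s)) has_integral (y t - y a)) {a..t}"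
      unfolding solL_def by auto
    then show "sol_Icc \<tau> L a b y"
      unfolding sol_Icc_def by (auto elim: continuous_on_subset)
  qed
next
  assume y: "\<forall>b\<ge>a. sol_Icc \<tau> L a b y"
  show "globL \<tau> L a y"
    unfolding globL_def solL_def
  proof (intro allI impI conjI)
    fix T
    assume "T > a"
    then have "continuous_on {a-\<tau>..T} y"
      using y unfolding sol_Icc_def by simp
    then show "continuous_on {a-\<tau>..<T} y"
      by (rule continuous_on_subset) auto
    show "\<forall>t\<in>{a..<T}. ((\<lambda>s. L s (seg \<tau> y s)) has_integral (y t - y a)) {a..t}"
      using y unfolding sol_Icc_def by auto
  qed
qed

lemma globL_shift:
  assumes "globL \<tau> L a y" "a \<le> b"
  shows "globL \<tau> L b y"
  unfolding globL_iff_sol_Icc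
proof (intro allI impI)
  fix c
  assume "b \<le> c"
  then have "sol_Icc \<tau> L a c y"
    using assms unfolding globL_iff_sol_Icc by simp
  then show "sol_Icc \<tau> L b c y"
    by (rule sol_Icc_subinterval) (use assms(2) \<open>b \<le> c\<close> in auto)
qed

lemma globL_of_sol_Icc_chain:
  assumes Y: "\<And>n. sol_Icc \<tau> L a (a + real n) (Y n)"
    and ext: "\<And>n t. t \<in> {a-\<tau>..a + real n} \<Longrightarrow> Y (Suc n) t = Y n t"
    and "\<tau> \<ge> 0"
  shows "globL \<tau> L a (\<lambda>t. Y (nat \<lceil>t - a\<rceil>) t)"
    and "\<And>t. t \<in> {a-\<tau>..a} \<Longrightarrow> Y (nat \<lceil>t - a\<rceil>) t = Y 0 t"
proof -
  have agree: "Y p t = Y n t" if "n \<le> p" "t \<in> {a-\<tau>..a + real n}" for n p t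
    using that(1)
  proof (induction p)
    case (Suc p)
    then show ?case
      using ext[of t p] that(2) by (cases "n = Suc p") auto
  qed simp
  have Yn: "Y (nat \<lceil>t - a\<rceil>) t = Y n t" if "t \<in> {a-\<tau>..a + real n}" for t n
  proof (cases "nat \<lceil>t - a\<rceil> \<le> n")
    case True
    have "t \<le> a + real (nat \<lceil>t - a\<rceil>)"
      by linarith
    then show ?thesis
      using agree[OF True] that by simp
  next
    case False
    then show ?thesis
      using agree[of n "nat \<lceil>t - a\<rceil>"] that by simp
  qed
  then show "\<And>t. t \<in> {a-\<tau>..a} \<Longrightarrow> Y (nat \<lceil>t - a\<rceil>) t = Y 0 t"
    by simp
  show "globL \<tau> L a (\<lambda>t. Y (nat \<lceil>t - a\<rceil>) t)"
    unfolding globL_iff_sol_Icc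
  proof (intro allI impI)
    fix b
    assume "a \<le> b"
    define n where "n = nat \<lceil>b - a\<rceil>"
    have "b \<le> a + real n"
      unfolding n_def by linarith
    then have "sol_Icc \<tau> L a b (Y n)"
      using \<open>a \<le> b\<close> by (intro sol_Icc_subinterval[OF Y]) auto
    then show "sol_Icc \<tau> L a b (\<lambda>t. Y (nat \<lceil>t - a\<rceil>) t)"
      by (rule sol_Icc_cong) (use Yn \<open>b \<le> a + real n\<close> assms(3) in auto)
  qed
qed

definition grid :: "real \<Rightarrow> real \<Rightarrow> nat \<Rightarrow> nat \<Rightarrow> real" where
  "grid a b N i = a + real i * ((b - a) / real N)"

lemma grid_0 [simp]: "grid a b N 0 = a"
  by (simp add: grid_def)

lemma grid_last [simp]: "N > 0 \<Longrightarrow> grid a b N N = b"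
  by (simp add: grid_def)

lemma grid_mono:
  assumes "a \<le> b" "i \<le> j"
  shows "grid a b N i \<le> grid a b N j"
  using assms unfolding grid_def by (intro add_left_mono mult_right_mono) auto

lemma grid_Suc: "grid a b N (Suc i) = grid a b N i + (b - a) / real N"
  by (simp only: grid_def of_nat_Suc distrib_right mult_1 add_ac)

lemma grid_bounds:
  assumes "a \<le> b" "i \<le> N" "N > 0"
  shows "a \<le> grid a b N i" "grid a b N i \<le> b"
  using grid_mono[OF assms(1), of 0 i N] grid_mono[OF assms(1,2), of N] assms(3) by simp_all

lemma sum_integral_grid:
  fixes G :: "real \<Rightarrow> real"
  assumes "G integrable_on {a..b}" "a \<le> b" "N > 0"
  shows "(\<Sum>i<N. integral {grid a b N i..grid a b N (Suc i)} G) = integral {a..b} G"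
proof -
  have "(\<Sum>i<n. integral {grid a b N i..grid a b N (Suc i)} G) = integral {a..grid a b N n} G"
    if "n \<le> N" for n
    using that
  proof (induction n)
    case (Suc n)
    have "G integrable_on {a..grid a b N (Suc n)}"
      using assms Suc.prems grid_bounds[of a b "Suc n" N]
      by (intro integrable_on_subinterval[OF assms(1)]) auto
    then have "integral {a..grid a b N n} G + integral {grid a b N n..grid a b N (Suc n)} G
        = integral {a..grid a b N (Suc n)} G"
      using assms Suc.prems grid_bounds[of a b n N] grid_mono[of a b n "Suc n" N]
      by (intro Henstock_Kurzweil_Integration.integral_combine) auto
    then show ?case
      using Suc by simp
  qed simp
  then show ?thesis
    using assms(3) by simp
qed

context linear_rfde
begin

lemma fine_grid_exists:
  assumes a: "0 \<le> a" and ab: "a \<le> b"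
  shows "\<exists>N>0. (b - a) / real N \<le> 1 \<and>
    (\<forall>i<N. integral {grid a b N i..grid a b N (Suc i)} m \<le> 1/2)"
proof -
  define M where "M t = integral {a..t} m" for t
  have "uniformly_continuous_on {a..b} M"
    unfolding M_def by (intro compact_uniformly_continuous indefinite_integral_continuous_1 m_integrable a)
      simp
  then obtain \<delta> where \<delta>: "\<delta> > 0" "\<forall>x\<in>{a..b}. \<forall>x'\<in>{a..b}. dist x' x < \<delta> \<longrightarrow> dist (M x') (M x) < 1/2"
    unfolding uniformly_continuous_on_def by (meson half_gt_zero zero_less_one)
  obtain N :: nat where N: "(b - a) / min \<delta> 1 < real N"
    using reals_Archimedean2 by blast
  have "0 \<le> (b - a) / min \<delta> 1"
    using \<delta> ab by simp
  then have Npos: "N > 0"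
    using N by (cases N) auto
  have "0 < min \<delta> 1"
    using \<delta> by simp
  then have "b - a < real N * min \<delta> 1"
    using N by (simp add: pos_divide_less_eq)
  then have h: "(b - a) / real N < min \<delta> 1"
    using Npos by (metis mult.commute of_nat_0_less_iff pos_divide_less_eq)
  show ?thesis
  proof (intro exI conjI allI impI)
    show "N > 0"
      by (rule Npos)
    show "(b - a) / real N \<le> 1"
      using h by linarith
    fix i
    assume i: "i < N"
    define p q where "p = grid a b N i" and "q = grid a b N (Suc i)"
    have pq: "a \<le> p" "p \<le> q" "q \<le> b"
      using grid_bounds[OF ab, of i N] grid_bounds[OF ab, of "Suc i" N] grid_mono[OF ab, of i "Suc i" N]
        i Npos unfolding p_def q_def by auto
    have "integral {a..p} m + integral {p..q} m = integral {a..q} m"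
      using pq by (intro Henstock_Kurzweil_Integration.integral_combine m_integrable a) auto
    moreover have "dist q p < \<delta>"
      using h pq unfolding p_def q_def dist_real_def grid_Suc by simp
    then have "dist (M q) (M p) < 1/2"
      using \<delta>(2) pq by auto
    ultimately show "integral {grid a b N i..grid a b N (Suc i)} m \<le> 1/2"
      unfolding M_def p_def[symmetric] q_def[symmetric] dist_real_def by linarith
  qed
qed

lemma sol_Icc_diff:
  assumes "0 \<le> a" "sol_Icc \<tau> L a b y1" "sol_Icc \<tau> L a b y2"
  shows "sol_Icc \<tau> L a b (\<lambda>t. y1 t - y2 t)"
  unfolding sol_Icc_def
proof (intro conjI ballI)
  have c: "continuous_on {a-\<tau>..b} y1" "continuous_on {a-\<tau>..b} y2"
    using assms unfolding sol_Icc_def by auto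
  then show "continuous_on {a-\<tau>..b} (\<lambda>t. y1 t - y2 t)"
    by (rule continuous_on_diff)
  fix t
  assume t: "t \<in> {a..b}"
  have "((\<lambda>s. L s (seg \<tau> y1 s) - L s (seg \<tau> y2 s)) has_integral ((y1 t - y1 a) - (y2 t - y2 a))) {a..t}"
    using assms t unfolding sol_Icc_def by (intro has_integral_diff) auto
  then have "((\<lambda>s. L s (seg \<tau> y1 s) - L s (seg \<tau> y2 s)) has_integral (y1 t - y2 t - (y1 a - y2 a))) {a..t}"
    by (simp add: algebra_simps)
  moreover have "L s (seg \<tau> y1 s) - L s (seg \<tau> y2 s) = L s (seg \<tau> (\<lambda>r. y1 r - y2 r) s)"
    if "s \<in> {a..t}" for s
    using that t assms(1) by (intro L_seg_diff[symmetric] continuous_on_subset[OF c(1)]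
        continuous_on_subset[OF c(2)]) auto
  ultimately show "((\<lambda>s. L s (seg \<tau> (\<lambda>r. y1 r - y2 r) s)) has_integral (y1 t - y2 t - (y1 a - y2 a))) {a..t}"
    by (rule has_integral_eq[rotated]) simp
qed

lemma globL_diff:
  assumes "0 \<le> a" "globL \<tau> L a y1" "globL \<tau> L a y2"
  shows "globL \<tau> L a (\<lambda>t. y1 t - y2 t)"
  using assms unfolding globL_iff_sol_Icc by (simp add: sol_Icc_diff)

text \<open>
  On an interval with \<open>\<integral>m \<le> 1/2\<close>, a function vanishing initially is at most twice its defect as a
  solution of (L): its maximum \<open>Z\<close> is at most the defect plus \<open>Z/2\<close>.
\<close>

lemma short_interval_bound:
  assumes a: "0 \<le> a" "a \<le> b" and mb: "integral {a..b} m \<le> 1/2"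
    and z: "continuous_on {a-\<tau>..b} z" and z0: "\<And>s. s \<in> {a-\<tau>..a} \<Longrightarrow> z s = 0"
    and E: "\<And>t. t \<in> {a..b} \<Longrightarrow> norm (z t - integral {a..t} (\<lambda>s. L s (seg \<tau> z s))) \<le> E"
    and s: "s \<in> {a-\<tau>..b}"
  shows "norm (z s) \<le> 2 * E"
proof -
  have "{a-\<tau>..b} \<noteq> {}"
    using a tau by auto
  then obtain x where x: "x \<in> {a-\<tau>..b}" "\<And>y. y \<in> {a-\<tau>..b} \<Longrightarrow> norm (z y) \<le> norm (z x)"
    using continuous_attains_sup[OF compact_Icc _ continuous_on_norm[OF z]] by blast
  have "norm (z a - integral {a..a} (\<lambda>s. L s (seg \<tau> z s))) \<le> E"
    using E[of a] a by simp
  then have E0: "0 \<le> E"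
    by (rule order_trans[OF norm_ge_zero])
  have "norm (z x) \<le> E + norm (z x) / 2"
  proof (cases "x \<in> {a..b}")
    case True
    have "norm (integral {a..x} (\<lambda>s. L s (seg \<tau> z s))) \<le> integral {a..x} m * norm (z x)"
      using True x by (intro norm_integral_L_seg_le a continuous_on_subset[OF z]) auto
    also have "\<dots> \<le> integral {a..b} m * norm (z x)"
      using True a by (intro mult_right_mono integral_m_mono) auto
    also have "\<dots> \<le> norm (z x) / 2"
      using mb mult_right_mono[OF mb norm_ge_zero[of "z x"]] by simp
    finally show ?thesis
      using E[OF True] norm_triangle_sub[of "z x" "integral {a..x} (\<lambda>s. L s (seg \<tau> z s))"] by linarith
  next
    case False
    then show ?thesis
      using x z0 E0 by simp
  qed
  then have "norm (z x) \<le> 2 * E"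
    by simp
  with x(2)[OF s] show ?thesis
    by linarith
qed

text \<open>
  The Picard operator of (L) on \<open>[a, b]\<close> with initial function \<open>u\<close> on \<open>[a - \<tau>, a]\<close>, continued
  by constants outside \<open>[a - \<tau>, b]\<close> so that it acts on bounded continuous functions on \<open>\<real>\<close>.
\<close>

definition picard :: "real \<Rightarrow> real \<Rightarrow> (real \<Rightarrow> 'a) \<Rightarrow> (real \<Rightarrow> 'a) \<Rightarrow> real \<Rightarrow> 'a" where
  "picard a b u w t =
    (if t \<le> a then u (max (a - \<tau>) t) else u a + integral {a..min t b} (\<lambda>s. L s (seg \<tau> w s)))"

lemma picard_bcontfun:
  assumes a: "0 \<le> a" "a \<le> b" and u: "continuous_on {a-\<tau>..a} u" and w: "continuous_on UNIV w"
  shows "picard a b u w \<in> bcontfun"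
proof -
  define I where "I r = u a + integral {a..r} (\<lambda>s. L s (seg \<tau> w s))" for r
  have I: "continuous_on {a..b} I"
    unfolding I_def using a continuous_on_subset[OF w]
    by (intro continuous_on_add continuous_on_const indefinite_integral_continuous_1 L_seg_integrable)
      simp_all
  have "continuous_on {..a} (\<lambda>t. u (max (a - \<tau>) t))"
    by (rule continuous_on_compose2[OF u]) (use tau in \<open>auto intro: continuous_intros\<close>)
  then have left: "continuous_on {..a} (picard a b u w)"
    by (rule continuous_on_eq) (simp add: picard_def)
  have "continuous_on {a..} (\<lambda>t. I (min t b))"
    by (rule continuous_on_compose2[OF I]) (use a in \<open>auto intro: continuous_intros\<close>)
  then have right: "continuous_on {a..} (picard a b u w)"
    by (rule continuous_on_eq) (use tau a in \<open>auto simp: picard_def I_def\<close>)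
  have "continuous_on ({..a} \<union> {a..}) (picard a b u w)"
    by (intro continuous_on_closed_Un left right closed_atMost closed_atLeast)
  moreover have "{..a} \<union> {a..} = (UNIV :: real set)"
    by auto
  ultimately have "continuous_on UNIV (picard a b u w)"
    by simp
  moreover have "picard a b u w t \<in> u ` {a-\<tau>..a} \<union> I ` {a..b}" for t
  proof (cases "t \<le> a")
    case True
    then have "u (max (a - \<tau>) t) \<in> u ` {a-\<tau>..a}"
      using tau by (intro imageI) simp
    then show ?thesis
      using True by (simp add: picard_def)
  next
    case False
    then have "I (min t b) \<in> I ` {a..b}"
      using a by (intro imageI) simp
    then show ?thesis
      using False by (simp add: picard_def I_def)
  qed
  then have "range (picard a b u w) \<subseteq> u ` {a-\<tau>..a} \<union> I ` {a..b}"
    by blast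
  moreover have "bounded (u ` {a-\<tau>..a} \<union> I ` {a..b})"
    unfolding bounded_Un
    by (intro conjI compact_imp_bounded compact_continuous_image u I compact_Icc)
  ultimately show ?thesis
    unfolding bcontfun_def using bounded_subset by blast
qed

lemma dist_picard_le:
  fixes w v :: "real \<Rightarrow>\<^sub>C 'a"
  assumes a: "0 \<le> a" "a \<le> b"
  shows "dist (picard a b u w t) (picard a b u v t) \<le> integral {a..b} m * dist w v"
proof (cases "t \<le> a")
  case True
  then show ?thesis
    using a integral_m_nonneg[of a b] by (simp add: picard_def)
next
  case False
  define r where "r = min t b"
  have "integral {a..r} (\<lambda>s. L s (seg \<tau> w s)) - integral {a..r} (\<lambda>s. L s (seg \<tau> v s))
      = integral {a..r} (\<lambda>s. L s (seg \<tau> w s) - L s (seg \<tau> v s))"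
    using a by (intro integral_diff[symmetric] L_seg_integrable) simp_all
  also have "\<dots> = integral {a..r} (\<lambda>s. L s (seg \<tau> (\<lambda>x. w x - v x) s))"
    using a by (intro integral_cong L_seg_diff[symmetric]) simp_all
  finally have "dist (picard a b u w t) (picard a b u v t)
      = norm (integral {a..r} (\<lambda>s. L s (seg \<tau> (\<lambda>x. w x - v x) s)))"
    using False unfolding picard_def r_def dist_norm by simp
  also have "\<dots> \<le> integral {a..r} m * dist w v"
    using a dist_bounded[of w _ v]
    by (intro norm_integral_L_seg_le continuous_on_diff continuous_on_apply_bcontfun) (auto simp: dist_norm)
  also have "\<dots> \<le> integral {a..b} m * dist w v"
    using a by (intro mult_right_mono integral_m_mono) (auto simp: r_def)
  finally show ?thesis .
qed

lemma sol_Icc_local_existence: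
  assumes a: "0 \<le> a" "a \<le> b" and mb: "integral {a..b} m \<le> 1/2"
    and u: "continuous_on {a-\<tau>..a} u"
  shows "\<exists>y. sol_Icc \<tau> L a b y \<and> (\<forall>s\<in>{a-\<tau>..a}. y s = u s)"
proof -
  define P where "P w = Bcontfun (picard a b u (apply_bcontfun w))" for w
  have P: "apply_bcontfun (P w) = picard a b u w" for w
    unfolding P_def using picard_bcontfun[OF a u] by (simp add: Bcontfun_inverse)
  have "dist (P w) (P v) \<le> 1/2 * dist w v" for w v
  proof (rule dist_bound)
    fix t
    have "dist (picard a b u w t) (picard a b u v t) \<le> integral {a..b} m * dist w v"
      by (rule dist_picard_le[OF a])
    also have "\<dots> \<le> 1/2 * dist w v"
      using mb by (intro mult_right_mono) simp_all
    finally show "dist (P w t) (P v t) \<le> 1/2 * dist w v"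
      unfolding P .
  qed
  then obtain y where "P y = y"
    using Banach_fix[OF complete_UNIV, of "1/2" P] by auto
  then have y: "apply_bcontfun y t = picard a b u y t" for t
    using P by metis
  show ?thesis
  proof (intro exI conjI ballI)
    show "y s = u s" if "s \<in> {a-\<tau>..a}" for s
      using that y[of s] by (simp add: picard_def)
    show "sol_Icc \<tau> L a b (apply_bcontfun y)"
      unfolding sol_Icc_def
    proof (intro conjI ballI)
      fix t
      assume t: "t \<in> {a..b}"
      have "y t - y a = integral {a..t} (\<lambda>s. L s (seg \<tau> y s))"
        using t y[of t] y[of a] tau by (cases "t = a") (auto simp: picard_def)
      then show "((\<lambda>s. L s (seg \<tau> y s)) has_integral (y t - y a)) {a..t}"
        using a by (simp add: integrable_integral L_seg_integrable)
    qed simp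
  qed
qed

lemma sol_Icc_extend:
  assumes "0 \<le> a" "a \<le> c" "c \<le> d" and y: "sol_Icc \<tau> L a c y"
  shows "\<exists>w. sol_Icc \<tau> L a d w \<and> (\<forall>t\<in>{a-\<tau>..c}. w t = y t)"
proof -
  obtain N where N: "N > 0" "\<forall>i<N. integral {grid c d N i..grid c d N (Suc i)} m \<le> 1/2"
    using fine_grid_exists[of c d] assms by auto
  have "\<exists>w. sol_Icc \<tau> L a (grid c d N i) w \<and> (\<forall>t\<in>{a-\<tau>..c}. w t = y t)" if "i \<le> N" for i
    using that
  proof (induction i)
    case 0
    then show ?case
      using y by auto
  next
    case (Suc i)
    then obtain w where w: "sol_Icc \<tau> L a (grid c d N i) w" "\<forall>t\<in>{a-\<tau>..c}. w t = y t"
      by auto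
    have i: "c \<le> grid c d N i" "grid c d N i \<le> grid c d N (Suc i)"
      using grid_bounds(1)[of c d i N] grid_mono[of c d i "Suc i" N] assms Suc.prems by auto
    have "continuous_on {a-\<tau>..grid c d N i} w"
      using w(1) unfolding sol_Icc_def by blast
    then have "continuous_on {grid c d N i - \<tau>..grid c d N i} w"
      by (rule continuous_on_subset) (use i assms in auto)
    moreover have "integral {grid c d N i..grid c d N (Suc i)} m \<le> 1/2"
      using N(2) Suc.prems by simp
    moreover have "0 \<le> grid c d N i"
      using i(1) assms by linarith
    ultimately have "\<exists>z. sol_Icc \<tau> L (grid c d N i) (grid c d N (Suc i)) z \<and>
        (\<forall>s\<in>{grid c d N i - \<tau>..grid c d N i}. z s = w s)"
      by (intro sol_Icc_local_existence i(2))
    then obtain z where z: "sol_Icc \<tau> L (grid c d N i) (grid c d N (Suc i)) z"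
      "\<forall>s\<in>{grid c d N i - \<tau>..grid c d N i}. z s = w s"
      by blast
    have "sol_Icc \<tau> L a (grid c d N (Suc i)) (\<lambda>t. if t \<le> grid c d N i then w t else z t)"
      by (rule sol_Icc_glue[OF w(1) z(1)]) (use z(2) i assms tau in auto)
    moreover have "\<forall>t\<in>{a-\<tau>..c}. (if t \<le> grid c d N i then w t else z t) = y t"
      using w(2) i(1) by auto
    ultimately show ?case
      by blast
  qed
  then show ?thesis
    using N(1) by (metis grid_last order_refl)
qed

lemma globL_exists:
  assumes "0 \<le> a" "\<phi> \<in> Cspace \<tau>"
  shows "\<exists>x. globL \<tau> L a x \<and> seg \<tau> x a = \<phi>"
proof -
  define P where "P n y \<longleftrightarrow> sol_Icc \<tau> L a (a + real n) y \<and> (\<forall>t\<in>{a-\<tau>..a}. y t = \<phi> (t - a))"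
    for n y
  have "continuous_on {-\<tau>..0} \<phi>"
    using assms(2) unfolding Cspace_def by blast
  then have "continuous_on {a-\<tau>..a} (\<lambda>t. \<phi> (t - a))"
    by (rule continuous_on_compose2) (auto intro: continuous_intros)
  then have "P 0 (\<lambda>t. \<phi> (t - a))"
    unfolding P_def sol_Icc_def by (simp add: has_integral_refl)
  moreover have "\<exists>z. P (Suc n) z \<and> (\<forall>t\<in>{a-\<tau>..a + real n}. z t = y t)" if y: "P n y" for n y
  proof -
    have "sol_Icc \<tau> L a (a + real n) y"
      using y unfolding P_def by blast
    then obtain z where z: "sol_Icc \<tau> L a (a + real (Suc n)) z" "\<forall>t\<in>{a-\<tau>..a + real n}. z t = y t"
      using sol_Icc_extend[of a "a + real n" "a + real (Suc n)" y] assms(1) by auto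
    moreover have "\<forall>t\<in>{a-\<tau>..a}. z t = \<phi> (t - a)"
      using y z(2) unfolding P_def by auto
    ultimately show ?thesis
      unfolding P_def by blast
  qed
  ultimately obtain Y where "\<forall>n. P n (Y n) \<and> (\<forall>t\<in>{a-\<tau>..a + real n}. Y (Suc n) t = Y n t)"
    using dependent_nat_choice[of P "\<lambda>n y z. \<forall>t\<in>{a-\<tau>..a + real n}. z t = y t"] by blast
  then have Y: "\<And>n. P n (Y n)" "\<And>n. \<forall>t\<in>{a-\<tau>..a + real n}. Y (Suc n) t = Y n t"
    by blast+
  have "globL \<tau> L a (\<lambda>t. Y (nat \<lceil>t - a\<rceil>) t)"
    "\<And>t. t \<in> {a-\<tau>..a} \<Longrightarrow> Y (nat \<lceil>t - a\<rceil>) t = Y 0 t"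
    using globL_of_sol_Icc_chain[of \<tau> L a Y] Y tau unfolding P_def by blast+
  moreover have "seg \<tau> (\<lambda>t. Y (nat \<lceil>t - a\<rceil>) t) a = \<phi>"
    using calculation(2) Y(1)[of 0] assms(2) unfolding P_def Cspace_def seg_def
    by (auto simp: fun_eq_iff)
  ultimately show ?thesis
    by blast
qed

end

section \<open>Variation of constants\<close>

lemma (in linear_rfde) short_interval_deviation:
  assumes a: "0 \<le> a" "a \<le> b" and mb: "integral {a..b} m \<le> 1/2"
    and x: "sol_Icc \<tau> (\<lambda>s \<phi>. L s \<phi> + f s \<phi>) a b x"
    and G: "G integrable_on {a..b}" "\<And>s. s \<in> {a..b} \<Longrightarrow> norm (f s (seg \<tau> x s)) \<le> G s"
    and Y: "sol_Icc \<tau> L a b Y" "\<And>s. s \<in> {a-\<tau>..a} \<Longrightarrow> Y s = x s"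
  shows "cnorm \<tau> (seg \<tau> (\<lambda>r. x r - Y r) b) \<le> 2 * integral {a..b} G"
proof -
  define z where "z r = x r - Y r" for r
  have xc: "continuous_on {a-\<tau>..b} x" and Yc: "continuous_on {a-\<tau>..b} Y"
    using x Y unfolding sol_Icc_def by auto
  then have zc: "continuous_on {a-\<tau>..b} z"
    unfolding z_def by (rule continuous_on_diff)
  have z0: "z s = 0" if "s \<in> {a-\<tau>..a}" for s
    using Y(2)[OF that] by (simp add: z_def)
  have Gnn: "0 \<le> G s" if "s \<in> {a..b}" for s
    by (rule order_trans[OF norm_ge_zero G(2)[OF that]])
  have defect: "norm (z r - integral {a..r} (\<lambda>s. L s (seg \<tau> z s))) \<le> integral {a..b} G"
    if r: "r \<in> {a..b}" for r
  proof -
    have "((\<lambda>s. (L s (seg \<tau> x s) + f s (seg \<tau> x s)) - L s (seg \<tau> Y s))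
        has_integral ((x r - x a) - (Y r - Y a))) {a..r}"
      using x Y(1) r unfolding sol_Icc_def by (intro has_integral_diff) auto
    moreover have "(x r - x a) - (Y r - Y a) = z r"
      using z0[of a] tau by (simp add: z_def)
    ultimately have H: "((\<lambda>s. (L s (seg \<tau> x s) + f s (seg \<tau> x s)) - L s (seg \<tau> Y s))
        has_integral z r) {a..r}"
      by simp
    have "(L s (seg \<tau> x s) + f s (seg \<tau> x s)) - L s (seg \<tau> Y s)
        = L s (seg \<tau> z s) + f s (seg \<tau> x s)" if "s \<in> {a..r}" for s
      using that r a unfolding z_def
      by (simp add: L_seg_diff continuous_on_subset[OF xc] continuous_on_subset[OF Yc])
    then have Hz: "((\<lambda>s. L s (seg \<tau> z s) + f s (seg \<tau> x s)) has_integral z r) {a..r}"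
      by (intro has_integral_eq[rotated, OF H])
    have Lz: "((\<lambda>s. L s (seg \<tau> z s)) has_integral integral {a..r} (\<lambda>s. L s (seg \<tau> z s))) {a..r}"
      using a r by (intro integrable_integral L_seg_integrable continuous_on_subset[OF zc]) auto
    have "((\<lambda>s. (L s (seg \<tau> z s) + f s (seg \<tau> x s)) - L s (seg \<tau> z s)) has_integral
        (z r - integral {a..r} (\<lambda>s. L s (seg \<tau> z s)))) {a..r}"
      by (rule has_integral_diff[OF Hz Lz])
    then have fx: "((\<lambda>s. f s (seg \<tau> x s)) has_integral
        (z r - integral {a..r} (\<lambda>s. L s (seg \<tau> z s)))) {a..r}"
      by simp
    have Gi: "G integrable_on {a..r}"
      using r by (intro integrable_on_subinterval[OF G(1)]) auto
    have "norm (integral {a..r} (\<lambda>s. f s (seg \<tau> x s))) \<le> integral {a..r} G"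
      using fx r by (intro integral_norm_bound_integral[OF _ Gi] G(2)) auto
    also have "\<dots> \<le> integral {a..b} G"
      using r Gnn by (intro integral_subset_le Gi G(1)) auto
    finally show ?thesis
      using integral_unique[OF fx] by simp
  qed
  have "norm (z s) \<le> 2 * integral {a..b} G" if "s \<in> {a-\<tau>..b}" for s
    by (rule short_interval_bound[OF a mb zc z0 defect that])
  then show ?thesis
    unfolding z_def[abs_def] by (intro cnorm_seg_leI tau) (use a in auto)
qed

lemma sum_exp_grid_le:
  fixes \<alpha> h :: real
  assumes \<alpha>: "\<alpha> > 0" and h: "0 \<le> h" "h \<le> 1"
  shows "(\<Sum>i<N. exp (- \<alpha> * (real N * h - real (Suc i) * h)) * h) \<le> exp \<alpha> / \<alpha>"
proof (cases "h = 0")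
  case True
  then show ?thesis
    using \<alpha> by simp
next
  case False
  then have hp: "h > 0"
    using h by simp
  define q where "q = exp (- \<alpha> * h)"
  have q: "0 < q" "q < 1"
    unfolding q_def using \<alpha> hp by auto
  have "exp (- \<alpha> * (real N * h - real (Suc i) * h)) = q ^ (N - Suc i)" if "i < N" for i
  proof -
    have "- \<alpha> * (real N * h - real (Suc i) * h) = real (N - Suc i) * (- \<alpha> * h)"
      using that by (simp add: of_nat_diff algebra_simps)
    then show ?thesis
      unfolding q_def by (simp only: exp_of_nat_mult)
  qed
  then have "(\<Sum>i<N. exp (- \<alpha> * (real N * h - real (Suc i) * h)) * h) = (\<Sum>i<N. q ^ (N - Suc i)) * h"
    by (simp add: sum_distrib_right)
  also have "(\<Sum>i<N. q ^ (N - Suc i)) = (\<Sum>i<N. q ^ i)"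
    by (rule sum.nat_diff_reindex)
  also have "\<dots> = (1 - q ^ N) / (1 - q)"
    using q by (simp add: sum_gp_strict)
  also have "\<dots> \<le> 1 / (1 - q)"
    using q by (intro divide_right_mono) auto
  finally have sum: "(\<Sum>i<N. exp (- \<alpha> * (real N * h - real (Suc i) * h)) * h) \<le> h / (1 - q)"
    using hp by (simp add: mult_right_mono)
  have "exp (\<alpha> * h) * q = 1"
    unfolding q_def by (simp add: exp_minus_inverse[symmetric] exp_add[symmetric])
  then have "(1 + \<alpha> * h) * q \<le> 1"
    using exp_ge_add_one_self[of "\<alpha> * h"] q by (metis mult_right_mono less_imp_le)
  then have "h / (1 - q) \<le> h / (\<alpha> * h * q)"
    using q \<alpha> hp by (intro divide_left_mono) (auto simp: algebra_simps)
  also have "\<dots> = exp (\<alpha> * h) / \<alpha>"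
    using hp unfolding q_def by (simp add: exp_minus field_simps)
  also have "\<dots> \<le> exp \<alpha> / \<alpha>"
    using \<alpha> h by (intro divide_right_mono) auto
  finally show ?thesis
    using sum by simp
qed

locale stable_rfde = linear_rfde +
  fixes k \<alpha> :: real
  assumes k_pos: "k > 0" and alpha_pos: "\<alpha> > 0"
    and stable: "exp_stable \<tau> L k \<alpha>"
begin

lemma stable_bound:
  assumes "0 \<le> a" "globL \<tau> L a y" "a \<le> t"
  shows "norm (y t) \<le> k * exp (- \<alpha> * (t - a)) * cnorm \<tau> (seg \<tau> y a)"
proof -
  have "continuous_on {a-\<tau>..a} y"
    using assms(2) unfolding globL_iff_sol_Icc sol_Icc_def by simp
  then have "seg \<tau> y a \<in> Cspace \<tau>"
    by (rule seg_in_Cspace)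
  then show ?thesis
    using stable assms unfolding exp_stable_def by blast
qed

text \<open>
  \<open>Y\<close> and \<open>Y'\<close> solve (L) from the data of \<open>x\<close> at \<open>a\<close> and at \<open>b\<close>; then \<open>Y' - Y\<close> solves (L) from \<open>b\<close>
  with the initial segment \<open>(x - Y)\<^sub>b\<close>, which is small on a short interval \<open>[a, b]\<close>.
\<close>

lemma restart_difference_bound:
  assumes ab: "0 \<le> a" "a \<le> b" "b \<le> t" and mb: "integral {a..b} m \<le> 1/2"
    and x: "sol_Icc \<tau> (\<lambda>s \<phi>. L s \<phi> + f s \<phi>) a b x"
    and G: "G integrable_on {a..b}" "\<And>s. s \<in> {a..b} \<Longrightarrow> norm (f s (seg \<tau> x s)) \<le> G s"
    and Y: "globL \<tau> L a Y" "seg \<tau> Y a = seg \<tau> x a"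
    and Y': "globL \<tau> L b Y'" "seg \<tau> Y' b = seg \<tau> x b"
  shows "norm (Y' t - Y t) \<le> k * exp (- \<alpha> * (t - b)) * (2 * integral {a..b} G)"
proof -
  have "globL \<tau> L b (\<lambda>r. Y' r - Y r)"
    using ab by (intro globL_diff Y'(1) globL_shift[OF Y(1)]) auto
  then have "norm (Y' t - Y t) \<le> k * exp (- \<alpha> * (t - b)) * cnorm \<tau> (seg \<tau> (\<lambda>r. Y' r - Y r) b)"
    using ab by (intro stable_bound) auto
  also have "seg \<tau> (\<lambda>r. Y' r - Y r) b = seg \<tau> (\<lambda>r. x r - Y r) b"
    unfolding seg_diff Y'(2) ..
  also have "cnorm \<tau> (seg \<tau> (\<lambda>r. x r - Y r) b) \<le> 2 * integral {a..b} G"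
  proof (rule short_interval_deviation[OF ab(1,2) mb x G])
    show "sol_Icc \<tau> L a b Y"
      using Y(1) ab unfolding globL_iff_sol_Icc by simp
    show "Y s = x s" if "s \<in> {a-\<tau>..a}" for s
      by (rule seg_eqD[OF Y(2) that])
  qed
  finally show ?thesis
    using k_pos by (simp add: mult_left_mono)
qed

lemma variation_of_constants:
  assumes t0: "0 \<le> t0" "t0 \<le> t"
    and x: "sol_Icc \<tau> (\<lambda>s \<phi>. L s \<phi> + f s \<phi>) t0 t x"
    and G: "G integrable_on {t0..t}" "\<And>s. s \<in> {t0..t} \<Longrightarrow> norm (f s (seg \<tau> x s)) \<le> G s"
    and N: "N > 0" "\<And>i. i < N \<Longrightarrow> integral {grid t0 t N i..grid t0 t N (Suc i)} m \<le> 1/2"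
  shows "norm (x t) \<le> k * exp (- \<alpha> * (t - t0)) * cnorm \<tau> (seg \<tau> x t0) +
    (\<Sum>i<N. k * exp (- \<alpha> * (t - grid t0 t N (Suc i))) *
      (2 * integral {grid t0 t N i..grid t0 t N (Suc i)} G))"
proof -
  define s where "s = grid t0 t N"
  have s_bounds: "t0 \<le> s i" "s i \<le> t" if "i \<le> N" for i
    unfolding s_def using grid_bounds[OF t0(2) that N(1)] by auto
  have s_Suc: "s i \<le> s (Suc i)" for i
    unfolding s_def using grid_mono[OF t0(2), of i "Suc i"] by simp
  have "\<exists>y. globL \<tau> L (s i) y \<and> seg \<tau> y (s i) = seg \<tau> x (s i)" if "i \<le> N" for i
  proof -
    have "continuous_on {t0 - \<tau>..t} x"
      using x unfolding sol_Icc_def by simp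
    then have "continuous_on {s i - \<tau>..s i} x"
      by (rule continuous_on_subset) (use s_bounds[OF that] in auto)
    then show ?thesis
      using globL_exists[OF _ seg_in_Cspace] s_bounds[OF that] t0 by simp
  qed
  then obtain Y where Y: "\<And>i. i \<le> N \<Longrightarrow> globL \<tau> L (s i) (Y i)"
    "\<And>i. i \<le> N \<Longrightarrow> seg \<tau> (Y i) (s i) = seg \<tau> x (s i)"
    by metis
  have piece: "norm (Y (Suc i) t - Y i t)
      \<le> k * exp (- \<alpha> * (t - s (Suc i))) * (2 * integral {s i..s (Suc i)} G)" if i: "i < N" for i
  proof (rule restart_difference_bound)
    show "0 \<le> s i" "s i \<le> s (Suc i)" "s (Suc i) \<le> t"
      using s_bounds[of i] s_bounds[of "Suc i"] s_Suc[of i] i t0 by auto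
    then show "sol_Icc \<tau> (\<lambda>s \<phi>. L s \<phi> + f s \<phi>) (s i) (s (Suc i)) x"
      "G integrable_on {s i..s (Suc i)}"
      using s_bounds[of i] i by (auto intro: sol_Icc_subinterval[OF x] integrable_on_subinterval[OF G(1)])
    show "norm (f r (seg \<tau> x r)) \<le> G r" if "r \<in> {s i..s (Suc i)}" for r
      using that s_bounds[of i] s_bounds[of "Suc i"] i by (intro G(2)) auto
    show "integral {s i..s (Suc i)} m \<le> 1/2"
      using N(2)[OF i] unfolding s_def .
  qed (use Y i in auto)
  have "x t = Y N t"
    using seg_eqD[OF Y(2)[of N], of t] N(1) tau by (simp add: s_def)
  also have "\<dots> = Y 0 t + (\<Sum>i<N. Y (Suc i) t - Y i t)"
    using sum_lessThan_telescope[of "\<lambda>i. Y i t" N] by simp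
  finally have "norm (x t) \<le> norm (Y 0 t) + norm (\<Sum>i<N. Y (Suc i) t - Y i t)"
    by (simp add: norm_triangle_ineq)
  also have "\<dots> \<le> norm (Y 0 t) + (\<Sum>i<N. norm (Y (Suc i) t - Y i t))"
    by (intro add_left_mono norm_sum)
  also have "\<dots> \<le> k * exp (- \<alpha> * (t - t0)) * cnorm \<tau> (seg \<tau> x t0) +
      (\<Sum>i<N. k * exp (- \<alpha> * (t - s (Suc i))) * (2 * integral {s i..s (Suc i)} G))"
    using stable_bound[of t0 "Y 0" t] Y(1,2)[of 0] t0 piece by (intro add_mono sum_mono) (simp_all add: s_def)
  finally show ?thesis
    unfolding s_def .
qed

lemma variation_of_constants_integral:
  assumes t0: "0 \<le> t0" "t0 \<le> t"
    and x: "sol_Icc \<tau> (\<lambda>s \<phi>. L s \<phi> + f s \<phi>) t0 t x"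
    and G: "G integrable_on {t0..t}" "\<And>s. s \<in> {t0..t} \<Longrightarrow> norm (f s (seg \<tau> x s)) \<le> G s"
  shows "norm (x t) \<le> k * exp (- \<alpha> * (t - t0)) * cnorm \<tau> (seg \<tau> x t0) + 2 * k * integral {t0..t} G"
proof -
  obtain N where N: "N > 0" "\<And>i. i < N \<Longrightarrow> integral {grid t0 t N i..grid t0 t N (Suc i)} m \<le> 1/2"
    using fine_grid_exists[OF t0] by blast
  define s where "s = grid t0 t N"
  have Gnn: "0 \<le> G r" if "r \<in> {t0..t}" for r
    by (rule order_trans[OF norm_ge_zero G(2)[OF that]])
  have piece: "0 \<le> integral {s i..s (Suc i)} G" "exp (- \<alpha> * (t - s (Suc i))) \<le> 1" if "i < N" for i
  proof -
    have "t0 \<le> s i" "s i \<le> s (Suc i)" "s (Suc i) \<le> t"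
      using grid_bounds[OF t0(2), of i N] grid_bounds[OF t0(2), of "Suc i" N]
        grid_mono[OF t0(2), of i "Suc i" N] that N(1) unfolding s_def by auto
    then show "0 \<le> integral {s i..s (Suc i)} G" "exp (- \<alpha> * (t - s (Suc i))) \<le> 1"
      using Gnn alpha_pos by (auto intro!: integral_nonneg integrable_on_subinterval[OF G(1)])
  qed
  have "(\<Sum>i<N. k * exp (- \<alpha> * (t - s (Suc i))) * (2 * integral {s i..s (Suc i)} G))
      \<le> (\<Sum>i<N. k * (2 * integral {s i..s (Suc i)} G))"
  proof (rule sum_mono)
    fix i
    assume "i \<in> {..<N}"
    then have "exp (- \<alpha> * (t - s (Suc i))) * (2 * integral {s i..s (Suc i)} G)
        \<le> 2 * integral {s i..s (Suc i)} G"
      using piece by (intro mult_left_le_one_le) auto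
    then show "k * exp (- \<alpha> * (t - s (Suc i))) * (2 * integral {s i..s (Suc i)} G)
        \<le> k * (2 * integral {s i..s (Suc i)} G)"
      using k_pos by (simp add: mult.assoc)
  qed
  also have "\<dots> = 2 * k * integral {t0..t} G"
    using sum_integral_grid[OF G(1) t0(2) N(1)] by (simp add: s_def sum_distrib_left[symmetric])
  finally show ?thesis
    using variation_of_constants[OF t0 x G N] unfolding s_def by linarith
qed

lemma variation_of_constants_bounded:
  assumes t0: "0 \<le> t0" "t0 \<le> t"
    and x: "sol_Icc \<tau> (\<lambda>s \<phi>. L s \<phi> + f s \<phi>) t0 t x"
    and B: "0 \<le> B" "\<And>s. s \<in> {t0..t} \<Longrightarrow> norm (f s (seg \<tau> x s)) \<le> B"
  shows "norm (x t) \<le> k * exp (- \<alpha> * (t - t0)) * cnorm \<tau> (seg \<tau> x t0) + 2 * k * B * exp \<alpha> / \<alpha>"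
proof -
  obtain N where N: "N > 0" "(t - t0) / real N \<le> 1"
    "\<And>i. i < N \<Longrightarrow> integral {grid t0 t N i..grid t0 t N (Suc i)} m \<le> 1/2"
    using fine_grid_exists[OF t0] by blast
  define h where "h = (t - t0) / real N"
  have h: "0 \<le> h" "h \<le> 1"
    unfolding h_def using N t0 by auto
  have term_eq: "k * exp (- \<alpha> * (t - grid t0 t N (Suc i))) *
      (2 * integral {grid t0 t N i..grid t0 t N (Suc i)} (\<lambda>_. B))
      = 2 * k * B * (exp (- \<alpha> * (real N * h - real (Suc i) * h)) * h)" for i
  proof -
    have e1: "t - grid t0 t N (Suc i) = real N * h - real (Suc i) * h"
      using N(1) unfolding grid_def h_def by simp
    have "grid t0 t N (Suc i) = grid t0 t N i + h"
      unfolding grid_Suc h_def ..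
    then have e2: "integral {grid t0 t N i..grid t0 t N (Suc i)} (\<lambda>_. B) = h * B"
      using h by simp
    show ?thesis
      unfolding e1 e2 by (simp add: mult_ac)
  qed
  have "(\<Sum>i<N. k * exp (- \<alpha> * (t - grid t0 t N (Suc i))) *
      (2 * integral {grid t0 t N i..grid t0 t N (Suc i)} (\<lambda>_. B)))
      = 2 * k * B * (\<Sum>i<N. exp (- \<alpha> * (real N * h - real (Suc i) * h)) * h)"
    unfolding sum_distrib_left by (intro sum.cong refl term_eq)
  also have "\<dots> \<le> 2 * k * B * (exp \<alpha> / \<alpha>)"
    using k_pos B alpha_pos h by (intro mult_left_mono sum_exp_grid_le) auto
  finally show ?thesis
    using variation_of_constants[OF t0 x integrable_const_ivl B(2) N(1,3)] by simp
qed

end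

section \<open>Dissipativity and asymptotic behaviour\<close>

lemma exp_decay_tendsto_zero:
  fixes \<alpha> :: real
  assumes "\<alpha> > 0"
  shows "((\<lambda>t. c * exp (- \<alpha> * (t - a))) \<longlongrightarrow> 0) at_top"
  using assms by real_asymp

lemma set_integrable_imp_integrable_on_Icc:
  fixes \<beta> :: "real \<Rightarrow> real"
  assumes "set_integrable lborel {0..} \<beta>" "0 \<le> a"
  shows "\<beta> integrable_on {a..b}"
proof (cases "a \<le> b")
  case True
  have "set_integrable lborel {a..b} \<beta>"
    using assms by (intro set_integrable_subset[OF assms(1)]) auto
  then show ?thesis
    by (rule set_borel_integral_eq_integral(1))
qed (simp add: integrable_on_empty)

lemma integral_tail_small:
  fixes \<beta> :: "real \<Rightarrow> real"
  assumes \<beta>0: "\<And>t. t \<ge> 0 \<Longrightarrow> \<beta> t \<ge> 0" and \<beta>: "set_integrable lborel {0..} \<beta>" and "\<epsilon> > 0"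
  shows "\<exists>T\<ge>0. \<forall>T'\<ge>T. \<forall>b. integral {T'..b} \<beta> \<le> \<epsilon>"
proof -
  have int: "\<beta> integrable_on {a..b}" if "0 \<le> a" for a b
    using set_integrable_imp_integrable_on_Icc[OF \<beta> that] .
  define I where "I b = integral {0..b} \<beta>" for b
  have "I b \<le> integral {0..} \<beta>" if "0 \<le> b" for b
    unfolding I_def using that int \<beta>0 set_borel_integral_eq_integral(1)[OF \<beta>]
    by (intro integral_subset_le) auto
  then have bdd: "bdd_above (I ` {0..})"
    by (intro bdd_aboveI2) auto
  obtain T where T: "0 \<le> T" "(SUP b\<in>{0..}. I b) - \<epsilon> < I T"
    using less_cSUP_iff[OF _ bdd, of "(SUP b\<in>{0..}. I b) - \<epsilon>"] \<open>\<epsilon> > 0\<close> by auto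
  have "integral {T'..b} \<beta> \<le> \<epsilon>" if "T \<le> T'" for T' b
  proof (cases "T' \<le> b")
    case True
    have "integral {0..T} \<beta> + integral {T..b} \<beta> = integral {0..b} \<beta>"
      using T that True by (intro Henstock_Kurzweil_Integration.integral_combine int) auto
    moreover have "integral {T'..b} \<beta> \<le> integral {T..b} \<beta>"
      using T that True int \<beta>0 by (intro integral_subset_le) auto
    moreover have "I b \<le> (SUP b\<in>{0..}. I b)"
      using bdd T that True by (intro cSUP_upper) auto
    ultimately show ?thesis
      using T unfolding I_def by linarith
  qed (use \<open>\<epsilon> > 0\<close> in simp)
  then show ?thesis
    using T(1) by blast
qed

lemma solP_sol_Icc:
  assumes "solP \<tau> L f S t0 T x" "t0 \<le> a" "a \<le> b" "b < T"
  shows "sol_Icc \<tau> (\<lambda>s \<phi>. L s \<phi> + f s \<phi>) a b x"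
proof -
  have "continuous_on {t0-\<tau>..<T} x"
    using assms(1) unfolding solP_def by blast
  then have "continuous_on {t0-\<tau>..b} x"
    by (rule continuous_on_subset) (use assms in auto)
  moreover have "\<forall>t\<in>{t0..b}. ((\<lambda>s. L s (seg \<tau> x s) + f s (seg \<tau> x s)) has_integral (x t - x t0)) {t0..t}"
    using assms unfolding solP_def by force
  ultimately have "sol_Icc \<tau> (\<lambda>s \<phi>. L s \<phi> + f s \<phi>) t0 b x"
    unfolding sol_Icc_def by blast
  then show ?thesis
    by (rule sol_Icc_subinterval) (use assms in auto)
qed

lemma globP_sol_Icc:
  assumes "globP \<tau> L f S t0 x" "t0 \<le> a" "a \<le> b"
  shows "sol_Icc \<tau> (\<lambda>s \<phi>. L s \<phi> + f s \<phi>) a b x"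
proof (rule solP_sol_Icc)
  show "solP \<tau> L f S t0 (b + 1) x"
    using assms unfolding globP_def by simp
qed (use assms in auto)

lemma globP_seg_in:
  assumes "globP \<tau> L f S t0 x" "t0 \<le> t"
  shows "seg \<tau> x t \<in> S"
proof -
  have "solP \<tau> L f S t0 (t + 1) x"
    using assms unfolding globP_def by simp
  then show ?thesis
    using assms(2) unfolding solP_def by simp
qed

context stable_rfde
begin

lemma globP_dissipative:
  assumes B: "\<forall>t\<ge>0. \<forall>\<phi>\<in>S. norm (f t \<phi>) \<le> B" and t0: "0 \<le> t0" and x: "globP \<tau> L f S t0 x"
  shows "Limsup at_top (\<lambda>t. ereal (norm (x t))) \<le> ereal (2 * k * max B 0 * exp \<alpha> / \<alpha> + 1)"
proof (rule Limsup_bounded)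
  define c where "c = cnorm \<tau> (seg \<tau> x t0)"
  have "\<forall>\<^sub>F t in at_top. k * c * exp (- \<alpha> * (t - t0)) < 1"
    using order_tendstoD(2)[OF exp_decay_tendsto_zero[OF alpha_pos, where c = "k * c" and a = t0], of 1]
    by simp
  moreover have "\<forall>\<^sub>F t in at_top. t0 \<le> t"
    by (rule eventually_ge_at_top)
  ultimately show "\<forall>\<^sub>F t in at_top. ereal (norm (x t)) \<le> ereal (2 * k * max B 0 * exp \<alpha> / \<alpha> + 1)"
  proof eventually_elim
    case (elim t)
    have "norm (x t) \<le> k * exp (- \<alpha> * (t - t0)) * c + 2 * k * max B 0 * exp \<alpha> / \<alpha>"
      unfolding c_def
    proof (rule variation_of_constants_bounded[OF t0 elim(2) globP_sol_Icc[OF x order_refl elim(2)]])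
      fix s
      assume "s \<in> {t0..t}"
      then have "seg \<tau> x s \<in> S" "0 \<le> s"
        using globP_seg_in[OF x] t0 by auto
      then have "norm (f s (seg \<tau> x s)) \<le> B"
        using B by blast
      then show "norm (f s (seg \<tau> x s)) \<le> max B 0"
        by simp
    qed simp
    then show ?case
      using elim(1) by (simp add: mult_ac)
  qed
qed

lemma globP_norm_le_integrable_perturbation:
  assumes \<beta>0: "\<And>t. t \<ge> 0 \<Longrightarrow> \<beta> t \<ge> 0" and \<beta>: "set_integrable lborel {0..} \<beta>"
    and f\<beta>: "\<forall>t\<ge>T0. \<forall>\<phi>\<in>S. norm (f t \<phi>) \<le> \<beta> t * cnorm \<tau> \<phi>"
    and x: "globP \<tau> L f S t0 x" and t1: "0 \<le> t0" "t0 \<le> t1" "T0 \<le> t1" "t1 \<le> t"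
    and Z: "\<And>r. r \<in> {t1-\<tau>..t} \<Longrightarrow> norm (x r) \<le> Z"
  shows "norm (x t) \<le> k * exp (- \<alpha> * (t - t1)) * cnorm \<tau> (seg \<tau> x t1) + 2 * k * Z * integral {t1..t} \<beta>"
proof -
  have "norm (x t) \<le> k * exp (- \<alpha> * (t - t1)) * cnorm \<tau> (seg \<tau> x t1) +
      2 * k * integral {t1..t} (\<lambda>s. \<beta> s * Z)"
  proof (rule variation_of_constants_integral[OF _ t1(4) globP_sol_Icc[OF x t1(2,4)]])
    show "(\<lambda>s. \<beta> s * Z) integrable_on {t1..t}"
      using t1 by (intro integrable_on_mult_left set_integrable_imp_integrable_on_Icc[OF \<beta>]) simp
    fix s
    assume s: "s \<in> {t1..t}"
    have "norm (f s (seg \<tau> x s)) \<le> \<beta> s * cnorm \<tau> (seg \<tau> x s)"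
      using f\<beta> globP_seg_in[OF x, of s] s t1 by simp
    also have "\<dots> \<le> \<beta> s * Z"
      using \<beta>0[of s] s t1 Z by (intro mult_left_mono cnorm_seg_leI tau) auto
    finally show "norm (f s (seg \<tau> x s)) \<le> \<beta> s * Z" .
  qed (use t1 in simp)
  then show ?thesis
    by (simp add: mult_ac)
qed

lemma le_twice_of_le_half_sup:
  fixes g :: "real \<Rightarrow> real"
  assumes g: "continuous_on {a..b} g" and r: "r \<in> {a..b}"
    and half: "\<And>s Z. s \<in> {a..b} \<Longrightarrow> (\<And>y. y \<in> {a..b} \<Longrightarrow> g y \<le> Z) \<Longrightarrow> g s \<le> A + Z / 2"
  shows "g r \<le> 2 * A"
proof -
  obtain s where s: "s \<in> {a..b}" "\<forall>y\<in>{a..b}. g y \<le> g s"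
    using continuous_attains_sup[OF compact_Icc _ g] r by auto
  then have "g s \<le> A + g s / 2"
    by (intro half) auto
  then show ?thesis
    using s(2) r by fastforce
qed

text \<open>
  Once \<open>\<integral>\<^bsub>t\<^sub>1\<^esub>\<^sup>\<infinity>\<beta> \<le> 1/(4k)\<close>, the perturbation contributes at most half of \<open>sup |x|\<close> on
  \<open>[t\<^sub>1 - \<tau>, t]\<close>.
\<close>

lemma globP_bounded_integrable_perturbation:
  assumes \<beta>0: "\<And>t. t \<ge> 0 \<Longrightarrow> \<beta> t \<ge> 0" and \<beta>: "set_integrable lborel {0..} \<beta>"
    and f\<beta>: "\<forall>t\<ge>T0. \<forall>\<phi>\<in>S. norm (f t \<phi>) \<le> \<beta> t * cnorm \<tau> \<phi>"
    and x: "globP \<tau> L f S t0 x" and t0: "0 \<le> t0"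
  shows "\<exists>t1\<ge>max t0 T0. \<exists>K\<ge>0. \<forall>r\<ge>t1 - \<tau>. norm (x r) \<le> K"
proof -
  obtain Ta where Ta: "\<forall>T'\<ge>Ta. \<forall>b. integral {T'..b} \<beta> \<le> 1 / (4 * k)"
    using integral_tail_small[OF \<beta>0 \<beta>, of "1 / (4 * k)"] k_pos by auto
  define t1 where "t1 = max (max Ta T0) t0"
  have t1: "t0 \<le> t1" "T0 \<le> t1" "Ta \<le> t1"
    unfolding t1_def by auto
  define c where "c = cnorm \<tau> (seg \<tau> x t1)"
  have xc: "continuous_on {t1-\<tau>..t} x" if "t1 \<le> t" for t
    using globP_sol_Icc[OF x t1(1) that] unfolding sol_Icc_def by simp
  have c0: "0 \<le> c"
    unfolding c_def using xc[of t1] by (intro cnorm_nonneg tau continuous_on_seg) simp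
  have bound: "norm (x r) \<le> 2 * max c (k * c)" if r: "r \<in> {t1-\<tau>..t}" and t: "t1 \<le> t" for r t
  proof (rule le_twice_of_le_half_sup[OF continuous_on_norm[OF xc[OF t]] r])
    fix s Z
    assume s: "s \<in> {t1-\<tau>..t}" and Z: "\<And>y. y \<in> {t1-\<tau>..t} \<Longrightarrow> norm (x y) \<le> Z"
    have Z0: "0 \<le> Z"
      by (rule order_trans[OF norm_ge_zero Z[OF s]])
    show "norm (x s) \<le> max c (k * c) + Z / 2"
    proof (cases "s \<le> t1")
      case True
      then have "norm (x s) \<le> c"
        unfolding c_def using s xc[of t1] by (intro norm_le_cnorm_seg) auto
      then show ?thesis
        using Z0 by linarith
    next
      case False
      have "norm (x s) \<le> k * exp (- \<alpha> * (s - t1)) * c + 2 * k * Z * integral {t1..s} \<beta>"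
        unfolding c_def using False s t1 t0 Z
        by (intro globP_norm_le_integrable_perturbation[OF \<beta>0 \<beta> f\<beta> x]) auto
      moreover have "exp (- \<alpha> * (s - t1)) \<le> 1"
        using False alpha_pos by simp
      then have "k * exp (- \<alpha> * (s - t1)) * c \<le> k * c"
        using k_pos c0 by (simp add: mult_left_le_one_le mult.assoc)
      moreover have "integral {t1..s} \<beta> \<le> 1 / (4 * k)"
        using Ta t1 by simp
      then have "2 * k * Z * integral {t1..s} \<beta> \<le> 2 * k * Z * (1 / (4 * k))"
        using k_pos Z0 by (intro mult_left_mono) auto
      moreover have "2 * k * Z * (1 / (4 * k)) = Z / 2"
        using k_pos by simp
      ultimately show ?thesis
        by linarith
    qed
  qed
  have "norm (x r) \<le> 2 * max c (k * c)" if "r \<ge> t1 - \<tau>" for r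
    using bound[of r "max r t1"] that by simp
  moreover have "0 \<le> 2 * max c (k * c)"
    using c0 by simp
  moreover have "max t0 T0 \<le> t1"
    using t1 by simp
  ultimately show ?thesis
    by blast
qed

lemma globP_tendsto_zero:
  assumes \<beta>0: "\<And>t. t \<ge> 0 \<Longrightarrow> \<beta> t \<ge> 0" and \<beta>: "set_integrable lborel {0..} \<beta>"
    and f\<beta>: "\<forall>t\<ge>T0. \<forall>\<phi>\<in>S. norm (f t \<phi>) \<le> \<beta> t * cnorm \<tau> \<phi>"
    and x: "globP \<tau> L f S t0 x" and t0: "0 \<le> t0"
  shows "(x \<longlongrightarrow> 0) at_top"
proof (rule tendstoI)
  fix \<epsilon> :: real
  assume \<epsilon>: "\<epsilon> > 0"
  obtain t1 K where t1: "max t0 T0 \<le> t1" and K: "0 \<le> K" "\<And>r. r \<ge> t1 - \<tau> \<Longrightarrow> norm (x r) \<le> K"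
    using globP_bounded_integrable_perturbation[OF \<beta>0 \<beta> f\<beta> x t0] by blast
  define p where "p = k * (K + 1)"
  have p: "p > 0" "k * K \<le> p"
    unfolding p_def using k_pos K by auto
  obtain Tb where Tb: "\<forall>T'\<ge>Tb. \<forall>b. integral {T'..b} \<beta> \<le> \<epsilon> / (4 * p)"
    using integral_tail_small[OF \<beta>0 \<beta>, of "\<epsilon> / (4 * p)"] \<epsilon> p by auto
  define t2 where "t2 = max Tb t1"
  have "\<forall>\<^sub>F t in at_top. k * K * exp (- \<alpha> * (t - t2)) < \<epsilon> / 2"
    using order_tendstoD(2)[OF exp_decay_tendsto_zero[OF alpha_pos, where c = "k * K" and a = t2],
        of "\<epsilon> / 2"] \<epsilon> by simp
  moreover have "\<forall>\<^sub>F t in at_top. t2 \<le> t"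
    by (rule eventually_ge_at_top)
  ultimately show "\<forall>\<^sub>F t in at_top. dist (x t) 0 < \<epsilon>"
  proof eventually_elim
    case (elim t)
    have t2: "t0 \<le> t2" "T0 \<le> t2" "Tb \<le> t2" "t1 \<le> t2"
      using t1 unfolding t2_def by auto
    have "norm (x t) \<le> k * exp (- \<alpha> * (t - t2)) * cnorm \<tau> (seg \<tau> x t2) + 2 * k * K * integral {t2..t} \<beta>"
      using t2 elim(2) t0 K(2) by (intro globP_norm_le_integrable_perturbation[OF \<beta>0 \<beta> f\<beta> x]) auto
    also have "k * exp (- \<alpha> * (t - t2)) * cnorm \<tau> (seg \<tau> x t2) \<le> k * exp (- \<alpha> * (t - t2)) * K"
      using k_pos t2 K(2) by (intro mult_left_mono cnorm_seg_leI tau) auto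
    also have "2 * k * K * integral {t2..t} \<beta> \<le> 2 * (k * K) * (\<epsilon> / (4 * p))"
    proof -
      have "integral {t2..t} \<beta> \<le> \<epsilon> / (4 * p)"
        using Tb t2 by simp
      then have "2 * (k * K) * integral {t2..t} \<beta> \<le> 2 * (k * K) * (\<epsilon> / (4 * p))"
        using k_pos K by (intro mult_left_mono) auto
      then show ?thesis
        by (simp add: mult.assoc)
    qed
    also have "\<dots> \<le> 2 * p * (\<epsilon> / (4 * p))"
      using p \<epsilon> by (intro mult_right_mono) auto
    also have "\<dots> = \<epsilon> / 2"
      using p by simp
    finally show ?case
      using elim(1) by (simp add: mult_ac)
  qed
qed

end

section \<open>Continuation of solutions\<close>

lemma continuous_on_atLeastLessThan:
  fixes f :: "real \<Rightarrow> 'a::topological_space"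
  assumes "\<And>c. a \<le> c \<Longrightarrow> c < b \<Longrightarrow> continuous_on {a..c} f"
  shows "continuous_on {a..<b} f"
  unfolding continuous_on_eq_continuous_within
proof
  fix p
  assume p: "p \<in> {a..<b}"
  define c where "c = (p + b) / 2"
  have c: "p < c" "c < b"
    using p unfolding c_def by auto
  then have "continuous (at p within {a..c}) f"
    using assms[of c] p by (simp add: continuous_on_eq_continuous_within)
  moreover have "at p within {a..<b} = at p within {a..c}"
    by (rule at_within_nhd[of p "{..<c}"]) (use c in auto)
  ultimately show "continuous (at p within {a..<b}) f"
    by simp
qed

lemma integrable_on_Icc_dominated:
  fixes h :: "real \<Rightarrow> 'a::euclidean_space"
  assumes ab: "a < b" and h: "\<And>c. c < b \<Longrightarrow> h integrable_on {a..c}"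
    and H: "H integrable_on {a..b}" "\<And>s. s \<in> {a..b} \<Longrightarrow> norm (h s) \<le> H s"
  shows "h integrable_on {a..b}"
proof -
  define c where "c n = b - (b - a) / real (Suc (Suc n))" for n
  have c: "a < c n" "c n < b" for n
  proof -
    have "0 < (b - a) / real (Suc (Suc n))" "(b - a) / real (Suc (Suc n)) < b - a"
      using ab by (simp_all add: divide_less_eq)
    then show "a < c n" "c n < b"
      unfolding c_def by linarith+
  qed
  define hn where "hn n s = (if s \<in> {a..c n} then h s else 0)" for n s
  have "(\<lambda>s. if s < b then h s else 0) integrable_on {a..b}"
  proof (rule dominated_convergence(1)[OF _ H(1)])
    fix n
    have "hn n integrable_on {a..c n}"
      using h[OF c(2)] by (rule integrable_eq) (simp add: hn_def)
    then show "hn n integrable_on {a..b}"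
      by (rule integrable_on_superset) (use c[of n] in \<open>auto simp: hn_def\<close>)
  next
    fix n s
    assume "s \<in> {a..b}"
    then show "norm (hn n s) \<le> H s"
      using H(2)[of s] order_trans[OF norm_ge_zero H(2)] by (simp add: hn_def)
  next
    fix s
    assume s: "s \<in> {a..b}"
    show "(\<lambda>n. hn n s) \<longlonglongrightarrow> (if s < b then h s else 0)"
    proof (cases "s < b")
      case True
      obtain N :: nat where N: "(b - a) / (b - s) < real N"
        using reals_Archimedean2 by blast
      have "s \<le> c n" if "n \<ge> N" for n
      proof -
        have "(b - a) / (b - s) < real (Suc (Suc n))"
          using N that by linarith
        then have "(b - a) / real (Suc (Suc n)) < b - s"
          using True by (simp add: divide_less_eq mult.commute)
        then show ?thesis
          unfolding c_def by simp
      qed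
      then show ?thesis
        using True s by (intro tendsto_eventually eventually_sequentiallyI[of N]) (simp add: hn_def)
    next
      case False
      then have "\<not> s \<le> c n" for n
        using c(2)[of n] by linarith
      then show ?thesis
        using False by (simp add: hn_def)
    qed
  qed
  then show ?thesis
    by (rule integrable_spike_finite[of "{b}", rotated 2]) auto
qed

lemma solP_cong:
  assumes "solP \<tau> L f S t0 T z" "\<And>t. t \<in> {t0-\<tau>..<T} \<Longrightarrow> y t = z t" "\<tau> \<ge> 0"
  shows "solP \<tau> L f S t0 T y"
  unfolding solP_def
proof (intro conjI ballI)
  have "continuous_on {t0-\<tau>..<T} z"
    using assms(1) unfolding solP_def by blast
  then show "continuous_on {t0-\<tau>..<T} y"
    by (rule continuous_on_eq) (simp add: assms(2))
  fix t
  assume t: "t \<in> {t0..<T}"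
  have seg_eq: "seg \<tau> y s = seg \<tau> z s" if "s \<in> {t0..t}" for s
    using that t by (intro seg_cong assms(2)) auto
  then show "seg \<tau> y t \<in> S"
    using assms(1) t unfolding solP_def by auto
  have "y t = z t" "y t0 = z t0"
    using t assms(3) by (simp_all add: assms(2))
  then have H: "((\<lambda>s. L s (seg \<tau> z s) + f s (seg \<tau> z s)) has_integral (y t - y t0)) {t0..t}"
    using assms(1) t unfolding solP_def by simp
  show "((\<lambda>s. L s (seg \<tau> y s) + f s (seg \<tau> y s)) has_integral (y t - y t0)) {t0..t}"
    using seg_eq by (intro has_integral_eq[rotated, OF H]) simp
qed

lemma solP_of_local:
  assumes "\<tau> \<ge> 0" "t0 < T" and loc: "\<And>t. t \<in> {t0..<T} \<Longrightarrow> \<exists>U>t. solP \<tau> L f S t0 U y"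
  shows "solP \<tau> L f S t0 T y"
  unfolding solP_def
proof (intro conjI ballI)
  show "continuous_on {t0-\<tau>..<T} y"
  proof (rule continuous_on_atLeastLessThan)
    fix c
    assume c: "t0 - \<tau> \<le> c" "c < T"
    obtain U where U: "max c t0 < U" "solP \<tau> L f S t0 U y"
      using loc[of "max c t0"] c assms(2) by auto
    then have "continuous_on {t0-\<tau>..<U} y"
      unfolding solP_def by blast
    then show "continuous_on {t0-\<tau>..c} y"
      by (rule continuous_on_subset) (use U(1) in auto)
  qed
  fix t
  assume t: "t \<in> {t0..<T}"
  obtain U where U: "t < U" "solP \<tau> L f S t0 U y"
    using loc[OF t] by blast
  then show "seg \<tau> y t \<in> S"
    "((\<lambda>s. L s (seg \<tau> y s) + f s (seg \<tau> y s)) has_integral (y t - y t0)) {t0..t}"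
    using t unfolding solP_def by auto
qed

lemma (in stable_rfde) solP_bounded:
  assumes B: "\<forall>t\<ge>0. \<forall>\<phi>\<in>S. norm (f t \<phi>) \<le> B" and t0: "0 \<le> t0" "t0 < T"
    and x: "solP \<tau> L f S t0 T x"
  shows "\<exists>K. \<forall>r\<in>{t0-\<tau>..<T}. norm (x r) \<le> K"
proof -
  define c where "c = cnorm \<tau> (seg \<tau> x t0)"
  have xc: "continuous_on {t0-\<tau>..t0} x"
    using solP_sol_Icc[OF x order_refl order_refl t0(2)] unfolding sol_Icc_def by simp
  have c0: "0 \<le> c"
    unfolding c_def by (intro cnorm_nonneg tau continuous_on_seg xc)
  have "norm (x r) \<le> c + k * c + 2 * k * max B 0 * exp \<alpha> / \<alpha>" if r: "r \<in> {t0-\<tau>..<T}" for r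
  proof (cases "r \<le> t0")
    case True
    have "norm (x r) \<le> c"
      unfolding c_def using r True by (intro norm_le_cnorm_seg[OF xc]) auto
    moreover have "0 \<le> k * c + 2 * k * max B 0 * exp \<alpha> / \<alpha>"
      using k_pos c0 alpha_pos by simp
    ultimately show ?thesis
      by linarith
  next
    case False
    have "norm (x r) \<le> k * exp (- \<alpha> * (r - t0)) * c + 2 * k * max B 0 * exp \<alpha> / \<alpha>"
      unfolding c_def
    proof (rule variation_of_constants_bounded[OF t0(1) _ solP_sol_Icc[OF x order_refl]])
      fix s
      assume "s \<in> {t0..r}"
      then have "seg \<tau> x s \<in> S" "0 \<le> s"
        using x r t0 unfolding solP_def by auto
      then show "norm (f s (seg \<tau> x s)) \<le> max B 0"
        using B by force
    qed (use False r in auto)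
    moreover have "k * exp (- \<alpha> * (r - t0)) * c \<le> k * c"
      using False k_pos c0 alpha_pos by (simp add: mult_left_le_one_le mult.assoc)
    ultimately show ?thesis
      using c0 by linarith
  qed
  then show ?thesis
    by blast
qed

text \<open>
  The right-hand side along a bounded solution with bounded forcing on \<open>[t\<^sub>0, T)\<close> is dominated by
  the integrable function \<open>m K + B\<close>, so the solution has a limit at \<open>T\<close>.
\<close>

lemma (in linear_rfde) solP_rhs_integrable:
  assumes t0: "0 \<le> t0" "t0 < T" and x: "solP \<tau> L f S t0 T x"
    and K: "\<And>r. r \<in> {t0-\<tau>..<T} \<Longrightarrow> norm (x r) \<le> K"
    and B: "\<And>s. s \<in> {t0..<T} \<Longrightarrow> norm (f s (seg \<tau> x s)) \<le> B"
  shows "(\<lambda>s. if s < T then L s (seg \<tau> x s) + f s (seg \<tau> x s) else 0) integrable_on {t0..T}"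
    (is "?h integrable_on _")
proof (rule integrable_on_Icc_dominated[OF t0(2)])
  have xc: "continuous_on {t0-\<tau>..<T} x"
    using x unfolding solP_def by blast
  show "?h integrable_on {t0..c}" if "c < T" for c
  proof (cases "t0 \<le> c")
    case True
    then have "((\<lambda>s. L s (seg \<tau> x s) + f s (seg \<tau> x s)) has_integral (x c - x t0)) {t0..c}"
      using x that unfolding solP_def by auto
    then have "(\<lambda>s. L s (seg \<tau> x s) + f s (seg \<tau> x s)) integrable_on {t0..c}"
      by blast
    then show ?thesis
      by (rule integrable_eq) (use that in auto)
  qed (simp add: integrable_on_empty)
  show "(\<lambda>s. m s * K + B) integrable_on {t0..T}"
    using t0 by (intro integrable_add integrable_on_mult_left m_integrable integrable_const_ivl) simp
  show "norm (?h s) \<le> m s * K + B" if s: "s \<in> {t0..T}" for s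
  proof (cases "s < T")
    case True
    have "norm (L s (seg \<tau> x s)) \<le> m s * K"
      using s True t0 K by (intro L_seg_bound continuous_on_subset[OF xc]) auto
    moreover have "norm (f s (seg \<tau> x s)) \<le> B"
      using B s True by simp
    ultimately show ?thesis
      using True norm_triangle_ineq[of "L s (seg \<tau> x s)" "f s (seg \<tau> x s)"] by simp
  next
    case False
    have "0 \<le> K" "0 \<le> B"
      using K[of t0] B[of t0] t0 tau order_trans[OF norm_ge_zero] by force+
    then show ?thesis
      using m_nonneg[of s] s t0 False by simp
  qed
qed

lemma (in linear_rfde) solP_close_at_end:
  assumes t0: "0 \<le> t0" "t0 < T" and x: "solP \<tau> L f S t0 T x"
    and K: "\<And>r. r \<in> {t0-\<tau>..<T} \<Longrightarrow> norm (x r) \<le> K"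
    and B: "\<And>s. s \<in> {t0..<T} \<Longrightarrow> norm (f s (seg \<tau> x s)) \<le> B"
  shows "\<exists>v. sol_Icc \<tau> (\<lambda>s \<phi>. L s \<phi> + f s \<phi>) t0 T (x(T := v))"
proof -
  define F where "F s \<phi> = L s \<phi> + f s \<phi>" for s \<phi>
  define h where "h s = (if s < T then F s (seg \<tau> x s) else 0)" for s
  have xc: "continuous_on {t0-\<tau>..<T} x"
    and xi: "\<And>t. t \<in> {t0..<T} \<Longrightarrow> ((\<lambda>s. F s (seg \<tau> x s)) has_integral (x t - x t0)) {t0..t}"
    using x unfolding solP_def F_def by auto
  have h_int: "(h has_integral (x t - x t0)) {t0..t}" if "t \<in> {t0..<T}" for t
    using that by (intro has_integral_eq[rotated, OF xi[OF that]]) (simp add: h_def)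
  have "h integrable_on {t0..T}"
    unfolding h_def F_def by (rule solP_rhs_integrable[OF t0 x K B])
  define y where "y = x(T := x t0 + integral {t0..T} h)"
  have y_int: "y t = x t0 + integral {t0..t} h" if t: "t \<in> {t0..T}" for t
  proof (cases "t < T")
    case True
    then show ?thesis
      using integral_unique[OF h_int[of t]] t by (simp add: y_def)
  qed (use t in \<open>simp add: y_def\<close>)
  have "continuous_on ({t0-\<tau>..t0} \<union> {t0..T}) y"
  proof (intro continuous_on_closed_Un closed_atLeastAtMost)
    have "continuous_on {t0-\<tau>..t0} x"
      using xc by (rule continuous_on_subset) (use t0 in auto)
    then show "continuous_on {t0-\<tau>..t0} y"
      by (rule continuous_on_eq) (use t0 in \<open>simp add: y_def\<close>)
    have "continuous_on {t0..T} (\<lambda>t. x t0 + integral {t0..t} h)"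
      by (intro continuous_on_add continuous_on_const indefinite_integral_continuous_1
          \<open>h integrable_on {t0..T}\<close>)
    then show "continuous_on {t0..T} y"
      by (rule continuous_on_eq) (simp add: y_int)
  qed
  moreover have "{t0-\<tau>..t0} \<union> {t0..T} = {t0-\<tau>..T}"
    using t0 tau by auto
  moreover have "((\<lambda>s. F s (seg \<tau> y s)) has_integral (y t - y t0)) {t0..t}" if t: "t \<in> {t0..T}" for t
  proof (rule has_integral_spike_finite[of "{T}"])
    have "h integrable_on {t0..t}"
      using t by (intro integrable_on_subinterval[OF \<open>h integrable_on {t0..T}\<close>]) auto
    then show "(h has_integral (y t - y t0)) {t0..t}"
      using y_int[OF t] y_int[of t0] t0 by (simp add: integrable_integral)
    show "F s (seg \<tau> y s) = h s" if "s \<in> {t0..t} - {T}" for s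
    proof -
      have "s < T"
        using that t by auto
      then have "seg \<tau> y s = seg \<tau> x s"
        by (intro seg_cong) (simp add: y_def)
      then show ?thesis
        using \<open>s < T\<close> by (simp add: h_def)
    qed
  qed simp
  ultimately have "sol_Icc \<tau> F t0 T y"
    unfolding sol_Icc_def by simp
  then show ?thesis
    unfolding y_def F_def by blast
qed

lemma solP_of_sol_Icc:
  assumes "sol_Icc \<tau> (\<lambda>s \<phi>. L s \<phi> + f s \<phi>) t0 T y" "\<And>t. t \<in> {t0..<T} \<Longrightarrow> seg \<tau> y t \<in> S"
  shows "solP \<tau> L f S t0 T y"
  using assms unfolding sol_Icc_def solP_def by (auto elim: continuous_on_subset)

lemma (in stable_rfde) solP_extend:
  assumes B: "\<forall>t\<ge>0. \<forall>\<phi>\<in>S. norm (f t \<phi>) \<le> B" and inv: "pos_invariant \<tau> L f S"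
    and t0: "0 \<le> t0" "t0 < T" and x: "solP \<tau> L f S t0 T x"
  shows "\<exists>T'>T. \<exists>w. solP \<tau> L f S t0 T' w \<and> (\<forall>t\<in>{t0-\<tau>..<T}. w t = x t)"
proof -
  have xS: "seg \<tau> x t \<in> S" if "t \<in> {t0..<T}" for t
    using x that unfolding solP_def by blast
  obtain K where K: "\<And>r. r \<in> {t0-\<tau>..<T} \<Longrightarrow> norm (x r) \<le> K"
    using solP_bounded[OF B t0 x] by blast
  have "norm (f s (seg \<tau> x s)) \<le> B" if "s \<in> {t0..<T}" for s
    using B xS[OF that] that t0 by auto
  then obtain v where "sol_Icc \<tau> (\<lambda>s \<phi>. L s \<phi> + f s \<phi>) t0 T (x(T := v))"
    using solP_close_at_end[OF t0 x K] by blast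
  define y where "y = x(T := v)"
  have y: "sol_Icc \<tau> (\<lambda>s \<phi>. L s \<phi> + f s \<phi>) t0 T y"
    unfolding y_def by fact
  have yx: "y t = x t" if "t < T" for t
    using that by (simp add: y_def)
  have "solP \<tau> L f S t0 T y"
    by (rule solP_cong[OF x]) (simp_all add: yx tau)
  moreover have "continuous_on {t0-\<tau>..T} y"
    using y unfolding sol_Icc_def by blast
  ultimately have "seg \<tau> y T \<in> S"
    using inv t0 unfolding pos_invariant_def by auto
  then obtain \<delta> z where \<delta>: "\<delta> > 0" and zT: "seg \<tau> z T = seg \<tau> y T"
    and z: "solP \<tau> L f S T (T + \<delta>) z"
    using inv t0 unfolding pos_invariant_def by (meson less_eq_real_def order_trans)
  define d where "d = T + \<delta> / 2"
  have d: "T < d" "d < T + \<delta>"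
    unfolding d_def using \<delta> by auto
  have zy: "z s = y s" if "s \<in> {T-\<tau>..T}" for s
    by (rule seg_eqD[OF zT that])
  define w where "w t = (if t \<le> T then y t else z t)" for t
  have w: "sol_Icc \<tau> (\<lambda>s \<phi>. L s \<phi> + f s \<phi>) t0 d w"
    unfolding w_def
    by (rule sol_Icc_glue[OF y solP_sol_Icc[OF z order_refl _ d(2)]]) (use zy t0 d tau in auto)
  have "seg \<tau> w t \<in> S" if t: "t \<in> {t0..<d}" for t
  proof (cases "t < T")
    case True
    then have "seg \<tau> w t = seg \<tau> x t"
      by (intro seg_cong) (simp add: w_def yx)
    then show ?thesis
      using xS True t by simp
  next
    case False
    then have "seg \<tau> w t = seg \<tau> z t"
      using zy by (intro seg_cong) (auto simp: w_def)
    then show ?thesis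
      using z False t d unfolding solP_def by auto
  qed
  then have "solP \<tau> L f S t0 d w"
    by (rule solP_of_sol_Icc[OF w])
  moreover have "\<forall>t\<in>{t0-\<tau>..<T}. w t = x t"
    by (simp add: w_def yx)
  ultimately show ?thesis
    using d by blast
qed

definition graph_below :: "real \<Rightarrow> (real \<Rightarrow> 'a) \<Rightarrow> ereal \<Rightarrow> (real \<times> 'a) set" where
  "graph_below a y U = {(t, y t) | t. a \<le> t \<and> ereal t < U}"

lemma mem_graph_below [simp]: "(t, v) \<in> graph_below a y U \<longleftrightarrow> a \<le> t \<and> ereal t < U \<and> v = y t"
  unfolding graph_below_def by auto

lemma graph_below_subset_imp_le:
  assumes "graph_below a y U \<subseteq> graph_below a z V" "ereal a < U"
  shows "U \<le> V"
proof (rule ccontr)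
  assume "\<not> U \<le> V"
  then have VU: "V < U"
    by simp
  show False
  proof (cases V)
    case (real v)
    have "(max a v, y (max a v)) \<in> graph_below a y U"
      using VU assms(2) real by (auto simp: max_def)
    then have "(max a v, y (max a v)) \<in> graph_below a z V"
      using assms(1) by blast
    then show False
      using real by simp
  next
    case MInf
    have "(a, y a) \<in> graph_below a y U"
      using assms(2) by simp
    then have "(a, y a) \<in> graph_below a z V"
      using assms(1) by blast
    then show False
      using MInf by simp
  next
    case PInf
    then show False
      using VU by simp
  qed
qed

lemma Union_chain_graph_below:
  assumes C: "chain\<^sub>\<subseteq> C" "\<And>G. G \<in> C \<Longrightarrow> \<exists>y U. G = graph_below a y U"
  shows "\<exists>z V. \<Union>C = graph_below a z V"
proof -
  define z where "z t = (SOME v. (t, v) \<in> \<Union>C)" for t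
  define V where "V = (SUP p\<in>\<Union>C. ereal (fst p))"
  have unique: "v = v'" if tv: "(t, v) \<in> \<Union>C" "(t, v') \<in> \<Union>C" for t v v'
  proof -
    obtain G G' where G: "G \<in> C" "G' \<in> C" "(t, v) \<in> G" "(t, v') \<in> G'"
      using tv by blast
    then obtain H where H: "H \<in> C" "(t, v) \<in> H" "(t, v') \<in> H"
      using C(1) unfolding chain_subset_def by blast
    obtain y U where "H = graph_below a y U"
      using C(2)[OF H(1)] by blast
    then show ?thesis
      using H by simp
  qed
  have "(t, v) \<in> \<Union>C \<longleftrightarrow> (t, v) \<in> graph_below a z V" for t v
  proof
    assume tv: "(t, v) \<in> \<Union>C"
    then obtain G where G: "G \<in> C" "(t, v) \<in> G"
      by blast
    obtain y U where G_eq: "G = graph_below a y U"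
      using C(2)[OF G(1)] by blast
    then have t: "a \<le> t" "ereal t < U"
      using G by auto
    then obtain t' where t': "ereal t < ereal t'" "ereal t' < U"
      using ereal_dense2 by blast
    then have "(t', y t') \<in> \<Union>C"
      using G(1) G_eq t by auto
    then have "ereal t' \<le> V"
      unfolding V_def by (metis SUP_upper fst_conv)
    with t'(1) have "ereal t < V"
      by (rule less_le_trans)
    moreover have "v = z t"
      unfolding z_def using tv unique by (metis someI)
    ultimately show "(t, v) \<in> graph_below a z V"
      using t by simp
  next
    assume "(t, v) \<in> graph_below a z V"
    then have t: "a \<le> t" "ereal t < V" "v = z t"
      by auto
    then obtain p where p: "p \<in> \<Union>C" "ereal t < ereal (fst p)"
      unfolding V_def by (auto simp: less_SUP_iff)
    then obtain G where G: "G \<in> C" "p \<in> G"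
      by blast
    obtain y U where G_eq: "G = graph_below a y U"
      using C(2)[OF G(1)] by blast
    then have "ereal (fst p) < U"
      using G(2) by (cases p) simp
    with p(2) have "ereal t < U"
      by (rule less_trans)
    then have "(t, y t) \<in> G"
      using G_eq t(1) by simp
    then have "(t, y t) \<in> \<Union>C"
      using G(1) by blast
    then show "(t, v) \<in> \<Union>C"
      unfolding t(3) z_def by (rule someI)
  qed
  then have "\<Union>C = graph_below a z V"
    by (intro set_eqI) (metis surj_pair)
  then show ?thesis
    by blast
qed

lemma solP_mono:
  assumes "solP \<tau> L f S t0 U y" "U' \<le> U"
  shows "solP \<tau> L f S t0 U' y"
proof -
  have "continuous_on {t0-\<tau>..<U} y"
    using assms(1) unfolding solP_def by blast
  then have "continuous_on {t0-\<tau>..<U'} y"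
    by (rule continuous_on_subset) (use assms(2) in auto)
  then show ?thesis
    using assms unfolding solP_def by auto
qed

text \<open>
  Continuations of \<open>x\<close> are encoded by their graphs over \<open>[t\<^sub>0 - \<tau>, U)\<close>, so that extension of
  continuations becomes inclusion of sets.
\<close>

definition continuation_graphs :: "real \<Rightarrow> (real \<Rightarrow> (real \<Rightarrow> 'a::euclidean_space) \<Rightarrow> 'a)
    \<Rightarrow> (real \<Rightarrow> (real \<Rightarrow> 'a) \<Rightarrow> 'a) \<Rightarrow> (real \<Rightarrow> 'a) set \<Rightarrow> real \<Rightarrow> real \<Rightarrow> (real \<Rightarrow> 'a)
    \<Rightarrow> (real \<times> 'a) set set" where
  "continuation_graphs \<tau> L f S t0 T x = {graph_below (t0 - \<tau>) y U | y U. ereal T \<le> U \<and>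
     (\<forall>T'. t0 < T' \<and> ereal T' \<le> U \<longrightarrow> solP \<tau> L f S t0 T' y) \<and> (\<forall>t\<in>{t0-\<tau>..<T}. y t = x t)}"

lemma Union_chain_continuation_graphs:
  assumes C: "C \<noteq> {}" "chain\<^sub>\<subseteq> C" "C \<subseteq> continuation_graphs \<tau> L f S t0 T x"
    and "\<tau> \<ge> 0" "t0 < T"
  shows "\<Union>C \<in> continuation_graphs \<tau> L f S t0 T x"
proof -
  define a where "a = t0 - \<tau>"
  have a: "a \<le> t0"
    unfolding a_def using assms(4) by simp
  have memC: "\<exists>y U. G = graph_below a y U \<and> ereal T \<le> U \<and>
      (\<forall>T'. t0 < T' \<and> ereal T' \<le> U \<longrightarrow> solP \<tau> L f S t0 T' y) \<and> (\<forall>t\<in>{a..<T}. y t = x t)"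
    if "G \<in> C" for G
    using that C(3) unfolding continuation_graphs_def a_def by blast
  then obtain z V where zV: "\<Union>C = graph_below a z V"
    using Union_chain_graph_below[OF C(2)] by meson
  have zy: "z t = y t" if "graph_below a y U \<in> C" "a \<le> t" "ereal t < U" for y U t
  proof -
    have "(t, y t) \<in> graph_below a y U"
      using that by simp
    then have "(t, y t) \<in> \<Union>C"
      using that(1) by blast
    then show ?thesis
      unfolding zV by simp
  qed
  obtain y0 U0 where G0: "graph_below a y0 U0 \<in> C" and TU0: "ereal T \<le> U0"
    and y0x: "\<forall>t\<in>{a..<T}. y0 t = x t"
    using C(1) memC by blast
  have "ereal a < ereal T"
    using a assms(5) by simp
  then have "ereal a < U0"
    using TU0 by (rule less_le_trans)
  then have "U0 \<le> V"
    using G0 zV by (intro graph_below_subset_imp_le[of a y0 U0 z V]) auto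
  with TU0 have TV: "ereal T \<le> V"
    by (rule order_trans)
  have zx: "z t = x t" if t: "t \<in> {a..<T}" for t
  proof -
    have "ereal t < ereal T"
      using t by simp
    then have "ereal t < U0"
      using TU0 by (rule less_le_trans)
    then show ?thesis
      using zy[OF G0, of t] t y0x by simp
  qed
  have "solP \<tau> L f S t0 T' z" if T': "t0 < T'" "ereal T' \<le> V" for T'
  proof (rule solP_of_local[OF assms(4) T'(1)])
    fix t
    assume t: "t \<in> {t0..<T'}"
    then have "ereal t < ereal T'"
      by simp
    then have "ereal t < V"
      using T'(2) by (rule less_le_trans)
    then have "(t, z t) \<in> \<Union>C"
      unfolding zV using a t by simp
    then obtain y U where G: "graph_below a y U \<in> C" "ereal t < U"
      and y: "\<forall>T'. t0 < T' \<and> ereal T' \<le> U \<longrightarrow> solP \<tau> L f S t0 T' y"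
      using memC by fastforce
    obtain U' where U': "ereal t < ereal U'" "ereal U' < U"
      using ereal_dense2[OF G(2)] by blast
    have y_sol: "solP \<tau> L f S t0 U' y"
      using y U' t by auto
    have "z s = y s" if s: "s \<in> {t0-\<tau>..<U'}" for s
    proof -
      have "ereal s < ereal U'"
        using s by simp
      then have "ereal s < U"
        using U'(2) by (rule less_trans)
      then show ?thesis
        using zy[OF G(1)] s unfolding a_def by simp
    qed
    then have "solP \<tau> L f S t0 U' z"
      by (rule solP_cong[OF y_sol _ assms(4)])
    then show "\<exists>U>t. solP \<tau> L f S t0 U z"
      using U'(1) by auto
  qed
  then show ?thesis
    unfolding zV continuation_graphs_def a_def[symmetric] using TV zx by blast
qed

text \<open>
  By Zorn's lemma there is a maximal continuation; it is global because one with a finite horizon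
  can be extended further.
\<close>

lemma (in stable_rfde) globP_continuation:
  assumes B: "\<forall>t\<ge>0. \<forall>\<phi>\<in>S. norm (f t \<phi>) \<le> B" and inv: "pos_invariant \<tau> L f S"
    and t0: "0 \<le> t0" "t0 < T" and x: "solP \<tau> L f S t0 T x"
  shows "\<exists>y. globP \<tau> L f S t0 y \<and> (\<forall>t\<in>{t0-\<tau>..<T}. y t = x t)"
proof -
  define A where "A = continuation_graphs \<tau> L f S t0 T x"
  have x_graph: "graph_below (t0 - \<tau>) x (ereal T) \<in> A"
    unfolding A_def continuation_graphs_def using solP_mono[OF x] by (intro CollectI exI[of _ x]) auto
  have "\<exists>U\<in>A. \<forall>X\<in>C. X \<subseteq> U" if C: "C \<in> chains A" for C
  proof (cases "C = {}")
    case False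
    then have "\<Union>C \<in> A"
      using C unfolding chains_def A_def by (intro Union_chain_continuation_graphs[OF False _ _ tau t0(2)]) auto
    then show ?thesis
      by blast
  qed (use x_graph in blast)
  then have "\<exists>M\<in>A. \<forall>X\<in>A. M \<subseteq> X \<longrightarrow> X = M"
    by (intro Zorn_Lemma2 ballI)
  then obtain M where M: "M \<in> A" "\<And>X. X \<in> A \<Longrightarrow> M \<subseteq> X \<Longrightarrow> X = M"
    by blast
  then obtain y U where M_eq: "M = graph_below (t0 - \<tau>) y U" and TU: "ereal T \<le> U"
    and y: "\<forall>T'. t0 < T' \<and> ereal T' \<le> U \<longrightarrow> solP \<tau> L f S t0 T' y" and yx: "\<forall>t\<in>{t0-\<tau>..<T}. y t = x t"
    unfolding A_def continuation_graphs_def by blast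
  show ?thesis
  proof (cases U)
    case PInf
    then show ?thesis
      using y yx unfolding globP_def by auto
  next
    case (real u)
    then have u: "T \<le> u" "solP \<tau> L f S t0 u y"
      using TU y t0 by auto
    then obtain T'' w where w: "u < T''" "solP \<tau> L f S t0 T'' w" "\<forall>t\<in>{t0-\<tau>..<u}. w t = y t"
      using solP_extend[OF B inv t0(1) _ u(2)] t0 by force
    have "graph_below (t0 - \<tau>) w T'' \<in> A"
      unfolding A_def continuation_graphs_def using w u yx solP_mono[OF w(2)] by force
    moreover have "M \<subseteq> graph_below (t0 - \<tau>) w T''"
      using w(1,3) real unfolding M_eq by auto
    ultimately have "graph_below (t0 - \<tau>) w T'' = M"
      by (rule M(2))
    moreover have "(u, w u) \<in> graph_below (t0 - \<tau>) w T''"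
      using w(1) u(1) t0 tau by simp
    ultimately show ?thesis
      using real unfolding M_eq by simp
  qed (use TU in simp)
qed

theorem theorem2p1:
  fixes \<tau> :: real
    and L :: "real \<Rightarrow> (real \<Rightarrow> real^'n) \<Rightarrow> real^'n"
    and f :: "real \<Rightarrow> (real \<Rightarrow> real^'n) \<Rightarrow> real^'n"
    and m :: "real \<Rightarrow> real"
    and S :: "(real \<Rightarrow> real^'n) set"
    and k \<alpha> :: real
  assumes tau: "\<tau> \<ge> 0"
    and L_add: "\<forall>t\<ge>0. \<forall>\<phi>\<in>Cspace \<tau>. \<forall>\<psi>\<in>Cspace \<tau>. L t (\<lambda>\<theta>. \<phi> \<theta> + \<psi> \<theta>) = L t \<phi> + L t \<psi>"
    and L_scale: "\<forall>t\<ge>0. \<forall>c::real. \<forall>\<phi>\<in>Cspace \<tau>. L t (\<lambda>\<theta>. c *\<^sub>R \<phi> \<theta>) = c *\<^sub>R L t \<phi>"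
    and L_meas: "\<forall>\<phi>\<in>Cspace \<tau>. set_borel_measurable lborel {0..} (\<lambda>t. L t \<phi>)"
    and L_bound: "\<forall>t\<ge>0. \<forall>\<phi>\<in>Cspace \<tau>. norm (L t \<phi>) \<le> m t * cnorm \<tau> \<phi>"
    and m_loc: "\<forall>T\<ge>0. set_integrable lborel {0..T} m"
    and k: "k > 0" and \<alpha>: "\<alpha> > 0"
    and stable: "exp_stable \<tau> L k \<alpha>"
    and S: "S \<subseteq> Cspace \<tau>"
    and f_cont: "cont_on_S \<tau> f S"
    and inv: "pos_invariant \<tau> L f S"
  shows
    "((\<exists>B. \<forall>t\<ge>0. \<forall>\<phi>\<in>S. norm (f t \<phi>) \<le> B) \<longrightarrow>
        (\<forall>t0\<ge>0. \<forall>T>t0. \<forall>x. solP \<tau> L f S t0 T x \<longrightarrow>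
            (\<exists>y. globP \<tau> L f S t0 y \<and> (\<forall>t\<in>{t0-\<tau>..<T}. y t = x t))) \<and>
        (\<exists>M>0. \<forall>t0\<ge>0. \<forall>x. globP \<tau> L f S t0 x \<longrightarrow>
            Limsup at_top (\<lambda>t. ereal (norm (x t))) \<le> ereal M))
     \<and>
     ((\<exists>\<beta>::real \<Rightarrow> real. (\<forall>t\<ge>0. \<beta> t \<ge> 0) \<and> set_integrable lborel {0..} \<beta> \<and>
          (\<exists>T0. \<forall>t\<ge>T0. \<forall>\<phi>\<in>S. norm (f t \<phi>) \<le> \<beta> t * cnorm \<tau> \<phi>)) \<longrightarrow>
        (\<forall>t0\<ge>0. \<forall>x. globP \<tau> L f S t0 x \<longrightarrow> (x \<longlongrightarrow> 0) at_top))"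
proof -
  interpret stable_rfde \<tau> L m k \<alpha>
    by unfold_locales (fact tau L_add L_scale L_meas L_bound m_loc k \<alpha> stable)+
  show ?thesis
  proof (intro conjI impI)
    assume "\<exists>B. \<forall>t\<ge>0. \<forall>\<phi>\<in>S. norm (f t \<phi>) \<le> B"
    then obtain B where B: "\<forall>t\<ge>0. \<forall>\<phi>\<in>S. norm (f t \<phi>) \<le> B"
      by blast
    show "\<forall>t0\<ge>0. \<forall>T>t0. \<forall>x. solP \<tau> L f S t0 T x \<longrightarrow>
        (\<exists>y. globP \<tau> L f S t0 y \<and> (\<forall>t\<in>{t0-\<tau>..<T}. y t = x t))"
      using globP_continuation[OF B inv] by blast
    have "0 < 2 * k * max B 0 * exp \<alpha> / \<alpha> + 1"
      using k \<alpha> by (simp add: add_nonneg_pos)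
    then show "\<exists>M>0. \<forall>t0\<ge>0. \<forall>x. globP \<tau> L f S t0 x \<longrightarrow>
        Limsup at_top (\<lambda>t. ereal (norm (x t))) \<le> ereal M"
      using globP_dissipative[OF B] by blast
  next
    assume "\<exists>\<beta>::real \<Rightarrow> real. (\<forall>t\<ge>0. \<beta> t \<ge> 0) \<and> set_integrable lborel {0..} \<beta> \<and>
      (\<exists>T0. \<forall>t\<ge>T0. \<forall>\<phi>\<in>S. norm (f t \<phi>) \<le> \<beta> t * cnorm \<tau> \<phi>)"
    then obtain \<beta> :: "real \<Rightarrow> real" and T0 where "\<And>t. t \<ge> 0 \<Longrightarrow> \<beta> t \<ge> 0"
      "set_integrable lborel {0..} \<beta>" "\<forall>t\<ge>T0. \<forall>\<phi>\<in>S. norm (f t \<phi>) \<le> \<beta> t * cnorm \<tau> \<phi>"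
      by blast
    then show "\<forall>t0\<ge>0. \<forall>x. globP \<tau> L f S t0 x \<longrightarrow> (x \<longlongrightarrow> 0) at_top"
      using globP_tendsto_zero by blast
  qed
qed

end
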